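(* Let $b,g$ be positive integers, $m=b+g$, and let $W$ be a binary-input channel. Let $L_1^{(1)},\dots,L_1^{(b)}$ and $R_1^{(1)},\dots,R_1^{(g)}$ be the level-1 channels obtained from $W$ (as defined in the context). Then for all $i=1,\dots,b$ and $j=1,\dots,g$, $$I(L_1^{(i)})\le I(W)\le I(R_1^{(j)}),$$ and both inequalities are strict unless $I(W)\in\{0,1\}$.
   Context: A binary-input channel $V\colon\{0,1\}\to\mathcal{Z}$ is a family of transition probabilities $V(z\mid x)$ on a discrete output alphabet; its symmetric capacity $I(V)$ is the mutual information (in bits) between a uniform input in $\{0,1\}$ and the output. Circuit associated with a pattern: a pattern is a word $\sigma=(\sigma_1,\dots,\sigma_m)\in\{L,R\}^m$ with $\sigma_1=L$ and $\sigma_m=R$. Choose distinct real numbers $p_1,\dots,p_{m-1}$ such that for $2\le k\le m-1$, $p_k<p_{k-1}$ if $\sigma_k=L$ and $p_k>p_{k-1}$ if $\sigma_k=R$. The map $u\mapsto x$ on $\{0,1\}^m$ is: start with $x=u$ and, for $k\in\{1,\dots,m-1\}$ taken in increasing order of $p_k$, replace $x_k$ by $x_k+x_{k+1}$ (mod 2). (The resulting map depends only on $\sigma$.) Given binary-input channels $V_1,\dots,V_m$, let $U_1,\dots,U_m$ be i.i.d. uniform on $\{0,1\}$, $X=x(U)$, and $Z_k$ the output of $V_k$ with input $X_k$, independently across $k$. The $k$-th synthesized channel is the channel from $U_k$ to $(Z_1,\dots,Z_m,U_1,\dots,U_{k-1})$; line $k$ is said to be of type $\sigma_k$. Pattern used: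 if $g\le b$, $\sigma=L^{b-g}(LR)^g$ ($b-g$ letters $L$ followed by $g$ pairs $LR$); if $g>b$, $\sigma=(LR)^bR^{g-b}$. Level-1 channels: apply the circuit with $V_1=\dots=V_m=W$; $L_1^{(i)}$ is the synthesized channel at the $i$-th line (counting from line 1 downward) of type $L$, and $R_1^{(j)}$ is the synthesized channel at the $j$-th line of type $R$. *)

theory Defs
  imports "HOL-Probability.Probability_Mass_Function" "HOL-Analysis.Infinite_Sum"
begin

type_synonym 'z channel = "bool \<Rightarrow> 'z pmf"

text \<open>Symmetric capacity (mutual information in bits between a uniform input and the output),
  with the convention 0 log 0 = 0 (automatic, since 0 * t = 0).\<close>
definition sym_cap :: "'z channel \<Rightarrow> real" where
  "sym_cap V = infsum (\<lambda>z. \<Sum>x\<in>(UNIV::bool set).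
      (1/2) * pmf (V x) z *
      log 2 (pmf (V x) z / ((pmf (V True) z + pmf (V False) z) / 2))) UNIV"

datatype LR = L | R

text \<open>Pattern used: L^(b-g) (LR)^g if g \<le> b, and (LR)^b R^(g-b) otherwise.
  Position k (1-indexed) of the pattern is the list element at index k-1.\<close>
definition pattern :: "nat \<Rightarrow> nat \<Rightarrow> LR list" where
  "pattern b g = (if g \<le> b then replicate (b - g) L @ concat (replicate g [L, R])
                  else concat (replicate b [L, R]) @ replicate (g - b) R)"

definition valid_order :: "LR list \<Rightarrow> (nat \<Rightarrow> real) \<Rightarrow> bool" where
  "valid_order \<sigma> p \<longleftrightarrow> inj_on p {1..<length \<sigma>} \<and>
     (\<forall>k\<in>{2..<length \<sigma>}. (\<sigma> ! (k - 1) = L \<longrightarrow> p k < p (k - 1)) \<and>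
                          (\<sigma> ! (k - 1) = R \<longrightarrow> p k > p (k - 1)))"

definition circuit :: "(nat \<Rightarrow> real) \<Rightarrow> nat \<Rightarrow> bool list \<Rightarrow> bool list" where
  "circuit p m u = fold (\<lambda>k x. x[k - 1 := (x ! (k - 1) \<noteq> x ! k)]) (sort_key p [1..<m]) u"

fun chan_out :: "(nat \<Rightarrow> 'z channel) \<Rightarrow> nat \<Rightarrow> bool list \<Rightarrow> 'z list pmf" where
  "chan_out V k [] = return_pmf []"
| "chan_out V k (x # xs) =
     bind_pmf (V k x) (\<lambda>z. bind_pmf (chan_out V (Suc k) xs) (\<lambda>zs. return_pmf (z # zs)))"

text \<open>The k-th synthesized channel: from U_k to (Z_1..Z_m, U_1..U_(k-1)), where U is
  uniform on {0,1}^m (so, given U_k = b, the other U_l are i.i.d. uniform).\<close>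
definition synth :: "(nat \<Rightarrow> 'z channel) \<Rightarrow> nat \<Rightarrow> (nat \<Rightarrow> real) \<Rightarrow> nat
                      \<Rightarrow> ('z list \<times> bool list) channel" where
  "synth V m p k b =
     bind_pmf (pmf_of_set {us :: bool list. length us = m \<and> us ! (k - 1) = b})
       (\<lambda>u. map_pmf (\<lambda>zs. (zs, take (k - 1) u)) (chan_out V 1 (circuit p m u)))"

definition nth_line :: "LR list \<Rightarrow> LR \<Rightarrow> nat \<Rightarrow> nat" where
  "nth_line \<sigma> t i = filter (\<lambda>k. \<sigma> ! (k - 1) = t) [1..<Suc (length \<sigma>)] ! (i - 1)"

definition L1 :: "'z channel \<Rightarrow> nat \<Rightarrow> nat \<Rightarrow> (nat \<Rightarrow> real) \<Rightarrow> nat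
                   \<Rightarrow> ('z list \<times> bool list) channel" where
  "L1 W b g p i = synth (\<lambda>_. W) (b + g) p (nth_line (pattern b g) L i)"

definition R1 :: "'z channel \<Rightarrow> nat \<Rightarrow> nat \<Rightarrow> (nat \<Rightarrow> real) \<Rightarrow> nat
                   \<Rightarrow> ('z list \<times> bool list) channel" where
  "R1 W b g p j = synth (\<lambda>_. W) (b + g) p (nth_line (pattern b g) R j)"

end

theory Submission
  imports Defs
begin

text \<open>The circuit satisfies \<open>x\<^sub>k = u\<^sub>k + x\<^sub>k\<^sub>+\<^sub>1\<close> or \<open>x\<^sub>k = u\<^sub>k + u\<^sub>k\<^sub>+\<^sub>1\<close> according as line \<open>k+1\<close>
  is of type L or R. At a line \<open>k \<ge> 2\<close> of type R this gives \<open>x\<^sub>k\<^sub>-\<^sub>1 = u\<^sub>k\<^sub>-\<^sub>1 + u\<^sub>k\<close>, so the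
  synthesized channel can be degraded to the pair formed by \<open>(u\<^sub>k\<^sub>-\<^sub>1, z\<^sub>k\<^sub>-\<^sub>1)\<close>, a copy of \<open>W\<close>
  whose input is masked by a uniform bit, and the independent outputs \<open>z\<^sub>k, \<dots>, z\<^sub>m\<close>; hence
  \<open>I(R) \<ge> I(W)\<close>. At a line \<open>k < m\<close> of type L, \<open>x\<^sub>k = u\<^sub>k + n\<close> with \<open>n\<close> a uniform bit produced by
  the lines below, and the synthesized channel is degraded from \<open>b \<mapsto> (v, Q(b + v))\<close> with
  \<open>v\<close> uniform and \<open>Q\<close> the channel from \<open>n\<close> to the outputs below, which is itself degraded
  from \<open>W\<close>; hence \<open>I(L) \<le> I(W)\<close>. Strictness is the strict data processing inequality: a
  kernel that discards, or merges, observations with different likelihood ratios loses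
  information, and such observations exist unless \<open>W\<close> is useless or perfect.\<close>

lemma ln_less_minus_one:
  assumes "0 < (t::real)" "t \<noteq> 1"
  shows "ln t < t - 1"
proof -
  have s: "0 < sqrt t" "sqrt t \<noteq> 1" using assms by auto
  have "ln t = 2 * ln (sqrt t)" using assms by (simp add: ln_sqrt)
  also have "\<dots> \<le> 2 * (sqrt t - 1)" using ln_le_minus_one[OF s(1)] by simp
  also have "\<dots> < t - 1"
  proof -
    have "(sqrt t - 1)^2 > 0" using s by simp
    then show ?thesis using assms by (simp add: power2_eq_square algebra_simps)
  qed
  finally show ?thesis .
qed

lemma diff_le_mult_ln_div:
  fixes a c :: real
  assumes "0 \<le> a" "0 \<le> c" "0 < a \<Longrightarrow> 0 < c"
  shows "a - c \<le> a * ln (a / c)"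
proof (cases "a = 0")
  case False
  then have pos: "0 < a" "0 < c" using assms by auto
  have "a * ln (c / a) \<le> a * (c / a - 1)"
    using pos by (intro mult_left_mono ln_le_minus_one) auto
  then show ?thesis using pos by (simp add: ln_div algebra_simps)
qed (use assms in simp)

lemma diff_less_mult_ln_div:
  fixes a c :: real
  assumes "0 < a" "0 < c" "a \<noteq> c"
  shows "a - c < a * ln (a / c)"
proof -
  have "a * ln (c / a) < a * (c / a - 1)"
    using assms by (intro mult_strict_left_mono ln_less_minus_one) auto
  then show ?thesis using assms by (simp add: ln_div algebra_simps)
qed

definition cap_term :: "real \<Rightarrow> real \<Rightarrow> real" where
  "cap_term a b = (1/2)*a*log 2 (a/((a+b)/2)) + (1/2)*b*log 2 (b/((a+b)/2))"

lemma sym_cap_eq_infsum_cap_term: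
  "sym_cap V = infsum (\<lambda>z. cap_term (pmf (V True) z) (pmf (V False) z)) UNIV"
  unfolding sym_cap_def cap_term_def by (simp add: UNIV_bool add_ac)

lemma mult_log_ratio_diff:
  fixes a b A B :: real
  assumes "0 \<le> a" "0 \<le> b" "0 \<le> A" "0 \<le> B" "0 < a \<Longrightarrow> 0 < A"
  shows "a * log 2 (a/((a+b)/2)) - a * log 2 (A/((A+B)/2)) = a * ln (a / ((a+b)*A/(A+B))) / ln 2"
proof (cases "a = 0")
  case False
  then have pos: "0 < a" "0 < A" "0 < a + b" "0 < A + B" using assms by auto
  have "log 2 (a/((a+b)/2)) - log 2 (A/((A+B)/2)) = log 2 ((a/((a+b)/2)) / (A/((A+B)/2)))"
    using pos by (intro log_divide_pos[symmetric]) auto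
  also have "(a/((a+b)/2)) / (A/((A+B)/2)) = a / ((a+b)*A/(A+B))"
    using pos by (simp add: divide_simps)
  finally have "log 2 (a/((a+b)/2)) - log 2 (A/((A+B)/2)) = ln (a / ((a+b)*A/(A+B))) / ln 2"
    by (simp add: log_def)
  then show ?thesis by (metis right_diff_distrib times_divide_eq_right)
qed simp

lemma cap_term_minus_tangent:
  fixes a b A B :: real
  assumes "0 \<le> a" "0 \<le> b" "0 \<le> A" "0 \<le> B" "0 < a \<Longrightarrow> 0 < A" "0 < b \<Longrightarrow> 0 < B"
  shows "cap_term a b - (1/2)*(a*log 2 (A/((A+B)/2)) + b*log 2 (B/((A+B)/2))) =
    (a * ln (a / ((a+b)*A/(A+B))) + b * ln (b / ((a+b)*B/(A+B)))) / (2 * ln 2)"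
  using mult_log_ratio_diff[of a b A B] mult_log_ratio_diff[of b a B A] assms
  unfolding cap_term_def by (simp add: add_ac field_simps)

text \<open>The tangent plane of the convex, positively homogeneous function \<open>cap_term\<close> at
  \<open>(A, B)\<close> lies below it (Gibbs' inequality).\<close>

lemma cap_term_ge_tangent:
  fixes a b A B :: real
  assumes "0 \<le> a" "0 \<le> b" "0 \<le> A" "0 \<le> B" "0 < a \<Longrightarrow> 0 < A" "0 < b \<Longrightarrow> 0 < B"
  shows "(1/2)*(a*log 2 (A/((A+B)/2)) + b*log 2 (B/((A+B)/2))) \<le> cap_term a b"
proof (cases "A + B = 0")
  case True
  then have "a = 0" "b = 0" using assms by force+
  then show ?thesis by (simp add: cap_term_def)
next
  case False
  have "(a - (a+b)*A/(A+B)) + (b - (a+b)*B/(A+B)) = 0"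
    using False by (simp add: field_simps)
  moreover have "a - (a+b)*A/(A+B) \<le> a * ln (a / ((a+b)*A/(A+B)))"
    using assms by (intro diff_le_mult_ln_div) auto
  moreover have "b - (a+b)*B/(A+B) \<le> b * ln (b / ((a+b)*B/(A+B)))"
    using assms by (intro diff_le_mult_ln_div) auto
  ultimately have "0 \<le> (a * ln (a / ((a+b)*A/(A+B))) + b * ln (b / ((a+b)*B/(A+B)))) / (2 * ln 2)"
    by (intro divide_nonneg_pos) auto
  then show ?thesis using cap_term_minus_tangent[OF assms] by linarith
qed

lemma cap_term_gt_tangent:
  fixes a b A B :: real
  assumes "0 \<le> a" "0 \<le> b" "0 \<le> A" "0 \<le> B" "0 < a \<Longrightarrow> 0 < A" "0 < b \<Longrightarrow> 0 < B"
    and "0 < a \<or> 0 < b" "a * B \<noteq> b * A"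
  shows "(1/2)*(a*log 2 (A/((A+B)/2)) + b*log 2 (B/((A+B)/2))) < cap_term a b"
proof -
  have S: "0 < A + B" using assms by auto
  have sum0: "(a - (a+b)*A/(A+B)) + (b - (a+b)*B/(A+B)) = 0"
    using S by (simp add: field_simps)
  have ga: "a - (a+b)*A/(A+B) \<le> a * ln (a / ((a+b)*A/(A+B)))"
    using assms by (intro diff_le_mult_ln_div) auto
  have gb: "b - (a+b)*B/(A+B) \<le> b * ln (b / ((a+b)*B/(A+B)))"
    using assms by (intro diff_le_mult_ln_div) auto
  have "a - (a+b)*A/(A+B) < a * ln (a / ((a+b)*A/(A+B))) \<or>
        b - (a+b)*B/(A+B) < b * ln (b / ((a+b)*B/(A+B)))"
  proof (cases "0 < a")
    case True
    have "a \<noteq> (a+b)*A/(A+B)" using assms(8) S by (auto simp: field_simps)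
    then show ?thesis using True assms by (intro disjI1 diff_less_mult_ln_div) auto
  next
    case False
    then have "0 < b" "a = 0" using assms by auto
    moreover have "b \<noteq> (a+b)*B/(A+B)" using assms(8) S \<open>a = 0\<close> by (auto simp: field_simps)
    ultimately show ?thesis using assms by (intro disjI2 diff_less_mult_ln_div) auto
  qed
  then have "0 < (a * ln (a / ((a+b)*A/(A+B))) + b * ln (b / ((a+b)*B/(A+B)))) / (2 * ln 2)"
    using sum0 ga gb by (intro divide_pos_pos) auto
  then show ?thesis using cap_term_minus_tangent[OF assms(1-6)] by linarith
qed

lemma cap_term_nonneg: "0 \<le> a \<Longrightarrow> 0 \<le> b \<Longrightarrow> 0 \<le> cap_term a b"
  using cap_term_ge_tangent[of a b 1 1] by simp

lemma cap_term_same [simp]: "cap_term a a = 0"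
  by (cases "a = 0") (simp_all add: cap_term_def)

lemma cap_term_zero: "0 \<le> a \<Longrightarrow> cap_term a 0 = a/2" "0 \<le> a \<Longrightarrow> cap_term 0 a = a/2"
  by (cases "a = 0"; simp add: cap_term_def)+

lemma cap_term_commute: "cap_term a b = cap_term b a"
  by (simp add: cap_term_def add_ac)

lemma cap_term_le_mean:
  assumes "0 \<le> a" "0 \<le> b"
  shows "cap_term a b \<le> (a+b)/2"
proof -
  have "x * log 2 (x/((a+b)/2)) \<le> x" if "x = a \<or> x = b" for x
  proof (cases "x = 0")
    case False
    then have "0 < x" using assms that by auto
    then have "0 < x/((a+b)/2)" "x/((a+b)/2) \<le> 2" using assms that by (auto simp: field_simps)
    then have "log 2 (x/((a+b)/2)) \<le> log 2 2" by (intro log_mono) auto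
    then show ?thesis using \<open>0 < x\<close> by (simp add: mult_le_cancel_left1)
  qed simp
  from this[of a] this[of b] show ?thesis unfolding cap_term_def by simp
qed

lemma cap_term_scale:
  assumes "0 \<le> k"
  shows "cap_term (k*a) (k*b) = k * cap_term a b"
proof (cases "k = 0")
  case False
  then have "0 < k" using assms by simp
  have e: "(k*a+k*b)/2 = k*((a+b)/2)" by (simp add: algebra_simps)
  have "(k*a)/((k*a+k*b)/2) = a/((a+b)/2)" "(k*b)/((k*a+k*b)/2) = b/((a+b)/2)"
    unfolding e using \<open>0 < k\<close> by simp_all
  then show ?thesis unfolding cap_term_def by (simp add: algebra_simps)
qed (simp add: cap_term_def)

lemma pmf_summable_on: "pmf p summable_on A"
  using abs_summable_equivalent[of "pmf p" A] pmf_abs_summable[of p A] by simp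

lemma infsum_pmf_UNIV: "infsum (pmf p) UNIV = 1"
  using infsetsum_infsum[OF pmf_abs_summable[of p UNIV]] infsetsum_pmf_eq_1[of p UNIV] by simp

lemma summable_on_if_le_pmf:
  fixes f :: "'a \<Rightarrow> real"
  assumes "\<And>x. 0 \<le> f x" "\<And>x. f x \<le> c * pmf p x"
  shows "f summable_on A"
proof (rule summable_on_comparison_test[where f="\<lambda>x. c * pmf p x"])
  show "(\<lambda>x. c * pmf p x) summable_on A" by (intro summable_on_cmult_right pmf_summable_on)
qed (use assms in auto)

lemma summable_on_pmf_mult_pmf: "(\<lambda>y. pmf M y * pmf (K y) z) summable_on A"
  by (rule summable_on_if_le_pmf[where c=1 and p=M]) (auto intro: mult_left_le simp: pmf_le_1)

lemma pmf_bind_eq_infsum: "pmf (bind_pmf M K) z = infsum (\<lambda>y. pmf M y * pmf (K y) z) UNIV"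
proof -
  have "pmf (bind_pmf M K) z = infsetsum (\<lambda>y. pmf M y * pmf (K y) z) UNIV"
    unfolding pmf_bind infsetsum_def measure_pmf_eq_density by (subst integral_density) simp_all
  moreover have "(\<lambda>y. norm (pmf M y * pmf (K y) z)) summable_on UNIV"
    using summable_on_pmf_mult_pmf[of M K z UNIV] by simp
  then have "(\<lambda>y. pmf M y * pmf (K y) z) abs_summable_on UNIV"
    using abs_summable_equivalent by blast
  ultimately show ?thesis by (simp add: infsetsum_infsum)
qed

lemma pmf_bind_ge: "pmf M y * pmf (f y) x \<le> pmf (bind_pmf M f) x"
proof -
  have "infsum (\<lambda>y'. pmf M y' * pmf (f y') x) {y} \<le> infsum (\<lambda>y'. pmf M y' * pmf (f y') x) UNIV"
    by (intro infsum_mono_neutral) (auto simp: summable_on_pmf_mult_pmf)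
  then show ?thesis by (simp add: pmf_bind_eq_infsum)
qed

lemma infsum_strict_mono:
  fixes f g :: "'a \<Rightarrow> real"
  assumes "f summable_on A" "g summable_on A" "\<And>x. x \<in> A \<Longrightarrow> f x \<le> g x" "x \<in> A" "f x < g x"
  shows "infsum f A < infsum g A"
  using has_sum_strict_mono[OF has_sum_infsum[OF assms(1)] has_sum_infsum[OF assms(2)]] assms by blast

lemma pmf_map_Pair: "pmf (map_pmf (Pair w) M) (v, z) = (if w = v then pmf M z else 0)"
proof (cases "w = v")
  case False
  then show ?thesis by (subst pmf_map_outside) auto
qed (simp add: pmf_map_inj' inj_on_def)

lemma pmf_bind_map_Pair_right:
  "pmf (bind_pmf M (\<lambda>y. map_pmf (\<lambda>z. (z, y)) (K y))) (z, y) = pmf M y * pmf (K y) z"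
proof -
  have "pmf (map_pmf (\<lambda>z. (z, y')) (K y')) (z, y) = (if y' = y then pmf (K y) z else 0)" for y'
  proof (cases "y' = y")
    case False
    then show ?thesis by (subst pmf_map_outside) auto
  qed (auto intro: pmf_map_inj' simp: inj_on_def)
  then have "pmf (bind_pmf M (\<lambda>y. map_pmf (\<lambda>z. (z, y)) (K y))) (z, y) =
      infsum (\<lambda>y'. if y' = y then pmf M y * pmf (K y) z else 0) UNIV"
    unfolding pmf_bind_eq_infsum by (intro infsum_cong) auto
  also have "\<dots> = pmf M y * pmf (K y) z"
    by (subst infsum_cong_neutral[where T="{y}"]) auto
  finally show ?thesis .
qed

lemma summable_on_cap_term_pmf: "(\<lambda>z. cap_term (pmf P z) (pmf Q z)) summable_on A"
proof (rule summable_on_comparison_test)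
  show "(\<lambda>z. (1/2) * pmf P z + (1/2) * pmf Q z) summable_on A"
    by (intro summable_on_add summable_on_cmult_right pmf_summable_on)
  show "cap_term (pmf P z) (pmf Q z) \<le> (1/2) * pmf P z + (1/2) * pmf Q z" for z
    using cap_term_le_mean[of "pmf P z" "pmf Q z"] by simp
qed (simp add: cap_term_nonneg)

section \<open>Data processing inequality\<close>

lemma scaled_tangent_le_cap_term:
  fixes a b k A B :: real
  defines "t \<equiv> (1/2)*((a*k) * log 2 (A/((A+B)/2)) + (b*k) * log 2 (B/((A+B)/2)))"
  assumes "0 \<le> a" "0 \<le> b" "0 \<le> k" "a*k \<le> A" "b*k \<le> B"
  shows "t \<le> k * cap_term a b"
    and "0 < k \<Longrightarrow> 0 < a \<or> 0 < b \<Longrightarrow> a*B \<noteq> b*A \<Longrightarrow> t < k * cap_term a b"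
proof -
  have "0 \<le> a*k" "0 \<le> b*k" using assms by simp_all
  then have hyps: "0 \<le> a*k" "0 \<le> b*k" "0 \<le> A" "0 \<le> B" "0 < a*k \<Longrightarrow> 0 < A" "0 < b*k \<Longrightarrow> 0 < B"
    using assms by linarith+
  have scale: "cap_term (a*k) (b*k) = k * cap_term a b"
    using cap_term_scale[of k a b] assms by (simp add: mult.commute)
  show "t \<le> k * cap_term a b"
    unfolding t_def scale[symmetric] by (rule cap_term_ge_tangent[OF hyps])
  assume "0 < k" "0 < a \<or> 0 < b" "a*B \<noteq> b*A"
  then show "t < k * cap_term a b"
    unfolding t_def scale[symmetric] using assms by (intro cap_term_gt_tangent[OF hyps]) auto
qed

text \<open>Pointwise data processing: \<open>cap_term\<close> at an output of the composed channel is the value of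
  the tangent plane at that point, summed over the intermediate symbols, hence at most the
  \<open>K\<close>-weighted sum of \<open>cap_term\<close> there.\<close>

lemma cap_term_pmf_bind_le:
  fixes V :: "bool \<Rightarrow> 'a pmf" and K :: "'a \<Rightarrow> 'b pmf" and z :: 'b
  defines "a \<equiv> \<lambda>y. pmf (V True) y" and "b \<equiv> \<lambda>y. pmf (V False) y"
    and "A \<equiv> pmf (bind_pmf (V True) K) z" and "B \<equiv> pmf (bind_pmf (V False) K) z"
  shows "cap_term A B \<le> infsum (\<lambda>y. pmf (K y) z * cap_term (a y) (b y)) UNIV"
    and "pmf (K y0) z > 0 \<Longrightarrow> a y0 > 0 \<or> b y0 > 0 \<Longrightarrow> a y0 * B \<noteq> b y0 * A \<Longrightarrow>
       cap_term A B < infsum (\<lambda>y. pmf (K y) z * cap_term (a y) (b y)) UNIV"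
proof -
  define k where "k = (\<lambda>y. pmf (K y) z)"
  define tangent where
    "tangent = (\<lambda>y. (1/2)*((a y * k y) * log 2 (A/((A+B)/2)) + (b y * k y) * log 2 (B/((A+B)/2))))"
  have hyps: "0 \<le> a y" "0 \<le> b y" "0 \<le> k y" "a y * k y \<le> A" "b y * k y \<le> B" for y
    unfolding a_def b_def k_def A_def B_def by (simp_all add: pmf_bind_ge)
  have sums: "(\<lambda>y. a y * k y) summable_on UNIV" "(\<lambda>y. b y * k y) summable_on UNIV"
    unfolding a_def b_def k_def by (rule summable_on_pmf_mult_pmf)+
  have "A = infsum (\<lambda>y. a y * k y) UNIV" "B = infsum (\<lambda>y. b y * k y) UNIV"
    unfolding A_def B_def a_def b_def k_def by (rule pmf_bind_eq_infsum)+
  then have cap_AB: "cap_term A B = infsum tangent UNIV"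
    unfolding tangent_def cap_term_def
    by (subst infsum_cmult_right') (simp add: infsum_add summable_on_cmult_left sums infsum_cmult_left')
  have tangent_summable: "tangent summable_on UNIV" unfolding tangent_def
    by (intro summable_on_cmult_right summable_on_add summable_on_cmult_left sums)
  have kcap_summable: "(\<lambda>y. k y * cap_term (a y) (b y)) summable_on UNIV"
  proof (rule summable_on_comparison_test)
    show "(\<lambda>y. cap_term (a y) (b y)) summable_on UNIV"
      unfolding a_def b_def by (rule summable_on_cap_term_pmf)
    show "k y * cap_term (a y) (b y) \<le> cap_term (a y) (b y)" for y
      using hyps(1-3)[of y] by (intro mult_left_le_one_le cap_term_nonneg) (auto simp: k_def pmf_le_1)
  qed (use hyps in \<open>simp add: cap_term_nonneg\<close>)
  have tangent_le: "tangent y \<le> k y * cap_term (a y) (b y)" for y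
    unfolding tangent_def by (rule scaled_tangent_le_cap_term(1)[OF hyps])
  show "cap_term A B \<le> infsum (\<lambda>y. pmf (K y) z * cap_term (a y) (b y)) UNIV"
    using infsum_mono[OF tangent_summable kcap_summable tangent_le] unfolding cap_AB k_def by simp
  assume "pmf (K y0) z > 0" "a y0 > 0 \<or> b y0 > 0" "a y0 * B \<noteq> b y0 * A"
  then have "tangent y0 < k y0 * cap_term (a y0) (b y0)"
    unfolding tangent_def k_def by (intro scaled_tangent_le_cap_term(2)[OF hyps[unfolded k_def]])
  then show "cap_term A B < infsum (\<lambda>y. pmf (K y) z * cap_term (a y) (b y)) UNIV"
    using infsum_strict_mono[OF tangent_summable kcap_summable tangent_le] unfolding cap_AB k_def by simp
qed

lemma sym_cap_eq_infsum_kernel: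
  fixes V :: "bool \<Rightarrow> 'a pmf" and K :: "'a \<Rightarrow> 'b pmf"
  defines "F \<equiv> \<lambda>z y. pmf (K y) z * cap_term (pmf (V True) y) (pmf (V False) y)"
  shows "(\<lambda>z. infsum (F z) UNIV) summable_on UNIV"
    and "sym_cap V = infsum (\<lambda>z. infsum (F z) UNIV) UNIV"
proof -
  define J where "J = (\<lambda>x. bind_pmf (V x) (\<lambda>y. map_pmf (\<lambda>z. (z, y)) (K y)))"
  have F_le: "F z y \<le> (1/2) * pmf (J True) (z,y) + (1/2) * pmf (J False) (z,y)" for z y
  proof -
    have "F z y \<le> pmf (K y) z * ((pmf (V True) y + pmf (V False) y)/2)"
      unfolding F_def by (intro mult_left_mono cap_term_le_mean) auto
    then show ?thesis unfolding J_def pmf_bind_map_Pair_right by (simp add: algebra_simps)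
  qed
  have F_summable: "(\<lambda>(z,y). F z y) summable_on UNIV \<times> UNIV"
  proof (rule summable_on_comparison_test)
    show "(\<lambda>p. (1/2) * pmf (J True) p + (1/2) * pmf (J False) p) summable_on UNIV \<times> UNIV"
      by (intro summable_on_add summable_on_cmult_right pmf_summable_on)
  qed (use F_le in \<open>auto simp: F_def intro!: mult_nonneg_nonneg cap_term_nonneg\<close>)
  show "(\<lambda>z. infsum (F z) UNIV) summable_on UNIV"
    using summable_on_Sigma_banach[of F UNIV "\<lambda>_. UNIV"] F_summable by simp
  have "infsum (\<lambda>z. F z y) UNIV = cap_term (pmf (V True) y) (pmf (V False) y)" for y
    unfolding F_def by (simp add: infsum_cmult_left' infsum_pmf_UNIV)
  then show "sym_cap V = infsum (\<lambda>z. infsum (F z) UNIV) UNIV"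
    unfolding sym_cap_eq_infsum_cap_term
    by (subst infsum_swap_banach) (use F_summable in simp_all)
qed

lemma sym_cap_bind_le: "sym_cap (\<lambda>x. bind_pmf (V x) K) \<le> sym_cap V"
  unfolding sym_cap_eq_infsum_cap_term[of "\<lambda>x. bind_pmf (V x) K"] sym_cap_eq_infsum_kernel(2)[of V K]
  by (rule infsum_mono[OF summable_on_cap_term_pmf sym_cap_eq_infsum_kernel(1) cap_term_pmf_bind_le(1)])

lemma sym_cap_map_le: "sym_cap (\<lambda>x. map_pmf f (V x)) \<le> sym_cap V"
  unfolding map_pmf_def by (rule sym_cap_bind_le)

lemma sym_cap_bind_less:
  assumes "pmf (K y) z > 0" "pmf (V True) y > 0 \<or> pmf (V False) y > 0"
    "pmf (V True) y * pmf (bind_pmf (V False) K) z \<noteq> pmf (V False) y * pmf (bind_pmf (V True) K) z"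
  shows "sym_cap (\<lambda>x. bind_pmf (V x) K) < sym_cap V"
  unfolding sym_cap_eq_infsum_cap_term[of "\<lambda>x. bind_pmf (V x) K"] sym_cap_eq_infsum_kernel(2)[of V K]
  by (rule infsum_strict_mono[OF summable_on_cap_term_pmf sym_cap_eq_infsum_kernel(1)
        cap_term_pmf_bind_le(1) _ cap_term_pmf_bind_le(2)[OF assms]]) simp_all

lemma sym_cap_bind_less_if_merges:
  assumes "pmf (K y1) z > 0" "pmf (K y2) z > 0"
    and "pmf (V True) y1 * pmf (V False) y2 \<noteq> pmf (V True) y2 * pmf (V False) y1"
  shows "sym_cap (\<lambda>x. bind_pmf (V x) K) < sym_cap V"
proof (rule ccontr)
  define A where "A = pmf (bind_pmf (V True) K) z"
  define B where "B = pmf (bind_pmf (V False) K) z"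
  assume not_less: "\<not> ?thesis"
  have proportional: "pmf (V True) y * B = pmf (V False) y * A" if "pmf (K y) z > 0" for y
  proof (cases "pmf (V True) y = 0 \<and> pmf (V False) y = 0")
    case False
    then have "pmf (V True) y > 0 \<or> pmf (V False) y > 0" by (simp add: order_less_le)
    then show ?thesis using sym_cap_bind_less[of K y z V, OF that] not_less unfolding A_def B_def by metis
  qed simp
  have pos: "0 < A" "0 < B"
  proof -
    have "pmf (V x) y1 > 0 \<or> pmf (V x) y2 > 0" for x
      using assms(3) by (cases x) (auto simp: order_less_le)
    moreover have "pmf (V x) y * pmf (K y) z \<le> pmf (bind_pmf (V x) K) z" for x y
      by (rule pmf_bind_ge)
    ultimately show "0 < A" "0 < B" unfolding A_def B_def
      using assms(1,2) by (meson mult_pos_pos order.strict_trans2)+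
  qed
  have "pmf (V True) y1 * pmf (V False) y2 * (A * B) = pmf (V True) y2 * pmf (V False) y1 * (A * B)"
    using proportional[OF assms(1)] proportional[OF assms(2)] by (metis mult.assoc mult.commute)
  then show False using assms(3) pos by simp
qed

lemma pmf_neq_imp_cross_neq:
  assumes "pmf P w \<noteq> pmf Q w"
  shows "\<exists>w1 w2. pmf P w1 * pmf Q w2 \<noteq> pmf P w2 * pmf Q w1"
proof (rule ccontr)
  assume "\<not> ?thesis"
  then have "infsum (\<lambda>w2. pmf P w * pmf Q w2) UNIV = infsum (\<lambda>w2. pmf P w2 * pmf Q w) UNIV"
    by simp
  then have "pmf P w = pmf Q w"
    by (simp add: infsum_cmult_right' infsum_cmult_left' infsum_pmf_UNIV)
  then show False using assms by simp
qed

lemma sym_cap_less_pair: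
  assumes "pmf (V True) y > 0" "pmf (V False) y > 0" "U True \<noteq> U False"
  shows "sym_cap V < sym_cap (\<lambda>b. pair_pmf (V b) (U b))"
proof -
  obtain w where "pmf (U True) w \<noteq> pmf (U False) w" using assms(3) by (auto simp: pmf_eq_iff)
  from pmf_neq_imp_cross_neq[OF this] obtain w1 w2
    where w: "pmf (U True) w1 * pmf (U False) w2 \<noteq> pmf (U True) w2 * pmf (U False) w1"
    by blast
  have V_eq: "(\<lambda>b. bind_pmf (pair_pmf (V b) (U b)) (\<lambda>p. return_pmf (fst p))) = V"
    by (simp add: map_pmf_def[symmetric] map_fst_pair_pmf)
  have "sym_cap (\<lambda>b. bind_pmf (pair_pmf (V b) (U b)) (\<lambda>p. return_pmf (fst p))) < sym_cap (\<lambda>b. pair_pmf (V b) (U b))"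
  proof (rule sym_cap_bind_less_if_merges[of _ "(y, w1)" y "(y, w2)"])
    have "pmf (V True) y * pmf (V False) y \<noteq> 0" using assms(1,2) by simp
    then show "pmf (pair_pmf (V True) (U True)) (y, w1) * pmf (pair_pmf (V False) (U False)) (y, w2) \<noteq>
        pmf (pair_pmf (V True) (U True)) (y, w2) * pmf (pair_pmf (V False) (U False)) (y, w1)"
      using w unfolding pmf_pair by (simp add: algebra_simps)
  qed simp_all
  then show ?thesis unfolding V_eq .
qed

lemma sym_cap_eq_0_if_inputs_eq: "V True = V False \<Longrightarrow> sym_cap V = 0"
  unfolding sym_cap_eq_infsum_cap_term by simp

lemma sym_cap_eq_1_if_disjoint:
  assumes "\<And>z. pmf (V True) z = 0 \<or> pmf (V False) z = 0"
  shows "sym_cap V = 1"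
proof -
  have "cap_term (pmf (V True) z) (pmf (V False) z) = (1/2) * pmf (V True) z + (1/2) * pmf (V False) z" for z
    using assms[of z] by (auto simp: cap_term_zero)
  then have "sym_cap V = infsum (\<lambda>z. (1/2) * pmf (V True) z + (1/2) * pmf (V False) z) UNIV"
    unfolding sym_cap_eq_infsum_cap_term by simp
  also have "\<dots> = 1"
  proof -
    have s: "(\<lambda>z. (1/2) * pmf (V x) z) summable_on UNIV" for x
      by (intro summable_on_cmult_right pmf_summable_on)
    show ?thesis by (simp only: infsum_add[OF s s] infsum_cmult_right' infsum_pmf_UNIV)
  qed
  finally show ?thesis .
qed

lemma sym_cap_neq_0_imp_inputs_differ: "sym_cap W \<noteq> 0 \<Longrightarrow> W True \<noteq> W False"
  using sym_cap_eq_0_if_inputs_eq by blast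

lemma sym_cap_neq_1_imp_common_output:
  assumes "sym_cap W \<noteq> 1"
  obtains z where "pmf (W True) z > 0" "pmf (W False) z > 0"
  using sym_cap_eq_1_if_disjoint[of W] assms by (metis pmf_nonneg order_le_less)

lemma sym_cap_flip_input: "sym_cap (\<lambda>x. V (\<not> x)) = sym_cap V"
  unfolding sym_cap_eq_infsum_cap_term by (simp add: cap_term_commute)

lemma sym_cap_uniform_mixture:
  fixes C :: "'v \<Rightarrow> bool \<Rightarrow> 'z pmf"
  assumes "finite D" "D \<noteq> {}"
  shows "sym_cap (\<lambda>x. bind_pmf (pmf_of_set D) (\<lambda>v. map_pmf (Pair v) (C v x))) =
         (\<Sum>v\<in>D. sym_cap (C v)) / card D"
proof -
  define M where "M = (\<lambda>x. bind_pmf (pmf_of_set D) (\<lambda>v. map_pmf (Pair v) (C v x)))"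
  have pmf_M: "pmf (M x) (v, z) = (if v \<in> D then pmf (C v x) z / card D else 0)" for x v z
  proof -
    have "pmf (M x) (v, z) = (\<Sum>w\<in>D. pmf (map_pmf (Pair w) (C w x)) (v,z)) / card D"
      unfolding M_def by (rule pmf_bind_pmf_of_set[OF assms(2,1)])
    also have "(\<Sum>w\<in>D. pmf (map_pmf (Pair w) (C w x)) (v,z)) = (\<Sum>w\<in>D. if w = v then pmf (C v x) z else 0)"
      by (intro sum.cong) (auto simp: pmf_map_Pair)
    finally show ?thesis using assms by (simp add: sum.delta')
  qed
  define f where "f = (\<lambda>v z. cap_term (pmf (M True) (v,z)) (pmf (M False) (v,z)))"
  have f_summable: "(\<lambda>(v,z). f v z) summable_on Sigma UNIV (\<lambda>_. UNIV)"
    unfolding f_def using summable_on_cap_term_pmf[of "M True" "M False" UNIV] by (simp add: case_prod_beta')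
  have f_slice: "infsum (f v) UNIV = sym_cap (C v) / card D" if "v \<in> D" for v
  proof -
    have fv: "f v = (\<lambda>z. cap_term (pmf (C v True) z) (pmf (C v False) z) * (1 / card D))"
      using that cap_term_scale[of "1 / card D"] by (auto simp: f_def pmf_M mult.commute)
    show ?thesis unfolding sym_cap_eq_infsum_cap_term fv infsum_cmult_left' by simp
  qed
  have "sym_cap M = infsum (\<lambda>(v,z). f v z) UNIV"
    unfolding sym_cap_eq_infsum_cap_term f_def by (simp add: case_prod_beta')
  also have "\<dots> = infsum (\<lambda>v. infsum (f v) UNIV) UNIV"
    using infsum_Sigma'_banach[OF f_summable] by simp
  also have "\<dots> = infsum (\<lambda>v. infsum (f v) UNIV) D"
    by (rule infsum_cong_neutral) (auto simp: f_def pmf_M)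
  also have "\<dots> = (\<Sum>v\<in>D. sym_cap (C v) / card D)"
    using assms f_slice by simp
  finally show ?thesis unfolding M_def by (simp add: sum_divide_distrib)
qed

lemma sym_cap_masked:
  assumes "finite D" "D \<noteq> {}"
  shows "sym_cap (\<lambda>x. bind_pmf (pmf_of_set D) (\<lambda>r. map_pmf (Pair r) (W (x \<noteq> e r)))) = sym_cap W"
proof -
  have "sym_cap (\<lambda>x. W (x \<noteq> e r)) = sym_cap W" for r
    using sym_cap_flip_input[of W] by (cases "e r") simp_all
  then show ?thesis
    using sym_cap_uniform_mixture[OF assms, of "\<lambda>r x. W (x \<noteq> e r)"] assms by simp
qed

section \<open>The circuit as a recursion along the lines\<close>

text \<open>Line \<open>k\<close> is processed after line \<open>k+1\<close> exactly when \<open>\<sigma>\<^sub>k\<^sub>+\<^sub>1 = L\<close>; hence the recursion.\<close>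

fun circuit_rec :: "LR list \<Rightarrow> bool list \<Rightarrow> bool list" where
  "circuit_rec (s # t # \<sigma>) (a # c # u) =
     (let r = circuit_rec (t # \<sigma>) (c # u) in (a \<noteq> (if t = L then hd r else c)) # r)"
| "circuit_rec \<sigma> u = u"

lemma length_circuit_rec [simp]: "length (circuit_rec \<sigma> u) = length u"
  by (induction \<sigma> u rule: circuit_rec.induct) (auto simp: Let_def)

lemma nth_circuit_rec:
  assumes "length \<sigma> = length u" "e < length u"
  shows "circuit_rec \<sigma> u ! e =
    (if e + 1 < length u then u ! e \<noteq> (if \<sigma> ! (e+1) = L then circuit_rec \<sigma> u ! (e+1) else u ! (e+1))
     else u ! e)"
  using assms
proof (induction \<sigma> u arbitrary: e rule: circuit_rec.induct)
  case (1 s t \<sigma> a c u)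
  show ?case
  proof (cases e)
    case 0
    have "circuit_rec (t # \<sigma>) (c # u) \<noteq> []" by (metis length_circuit_rec length_0_conv list.distinct(1))
    then show ?thesis using 0 by (cases "circuit_rec (t # \<sigma>) (c # u)") (auto simp: Let_def)
  next
    case (Suc e')
    then show ?thesis using "1.IH"[of e'] "1.prems" by (simp add: Let_def)
  qed
qed auto

definition update_line :: "nat \<Rightarrow> bool list \<Rightarrow> bool list" where
  "update_line k x = x[k - 1 := (x ! (k - 1) \<noteq> x ! k)]"

lemma circuit_eq_fold: "circuit p m u = fold update_line (sort_key p [1..<m]) u"
  unfolding circuit_def update_line_def ..

text \<open>The state after the lines in \<open>ks\<close> have been processed: line \<open>e+1\<close> has added the
  value that line \<open>e+2\<close> held at that time, which is final if line \<open>e+2\<close> came earlier.\<close>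

definition lines_done :: "(nat \<Rightarrow> real) \<Rightarrow> nat list \<Rightarrow> bool list \<Rightarrow> bool list \<Rightarrow> bool" where
  "lines_done p ks u x \<longleftrightarrow> length x = length u \<and> (\<forall>e < length u. x ! e =
     (if e + 1 \<in> set ks
      then u ! e \<noteq> (if e + 2 \<in> set ks \<and> p (e+2) < p (e+1) then x ! (e+1) else u ! (e+1))
      else u ! e))"

lemma lines_done_snoc:
  assumes "lines_done p ks u x" "k \<notin> set ks" "1 \<le> k" "k < length u" "\<And>i. i \<in> set ks \<Longrightarrow> p i < p k"
  shows "lines_done p (ks @ [k]) u (update_line k x)"
  unfolding lines_done_def
proof (intro conjI allI impI)
  have x: "length x = length u" "\<And>e. e < length u \<Longrightarrow> x ! e =
      (if e + 1 \<in> set ks then u ! e \<noteq> (if e + 2 \<in> set ks \<and> p (e+2) < p (e+1) then x ! (e+1) else u ! (e+1))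
       else u ! e)"
    using assms(1) unfolding lines_done_def by blast+
  show "length (update_line k x) = length u" using x(1) by (simp add: update_line_def)
  have xk1: "x ! (k - 1) = u ! (k - 1)" using x(2)[of "k - 1"] assms(2-4) by auto
  have xk: "x ! k = (if k + 1 \<in> set ks then x ! k else u ! k)" using x(2)[of k] assms(4) by auto
  fix e assume e: "e < length u"
  show "update_line k x ! e =
    (if e + 1 \<in> set (ks @ [k])
     then u ! e \<noteq> (if e + 2 \<in> set (ks @ [k]) \<and> p (e+2) < p (e+1) then update_line k x ! (e+1) else u ! (e+1))
     else u ! e)"
  proof (cases "e = k - 1")
    case True
    have "(k + 1 \<in> set ks) = (k + 1 \<in> set ks \<and> p (k+1) < p k)" using assms(5) by auto
    then show ?thesis using True assms(3,4) x(1) xk1 xk by (auto simp: update_line_def)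
  next
    case False
    have "e + 2 \<in> set ks \<Longrightarrow> e + 1 \<noteq> k - 1" using assms(2,3) by auto
    then have same: "update_line k x ! e = x ! e" "e + 2 \<in> set ks \<Longrightarrow> update_line k x ! (e+1) = x ! (e+1)"
      using False by (simp_all add: update_line_def)
    have "(e + 2 \<in> set (ks @ [k]) \<and> p (e+2) < p (e+1)) = (e + 2 \<in> set ks \<and> p (e+2) < p (e+1))"
      if "e + 1 \<in> set ks"
      using assms(5)[OF that] by auto
    then show ?thesis using x(2)[OF e] same False by (auto; linarith)
  qed
qed

lemma lines_done_fold:
  assumes "distinct ks" "sorted_wrt (\<lambda>i j. p i < p j) ks" "set ks \<subseteq> {1..<length u}"
  shows "lines_done p ks u (fold update_line ks u)"
  using assms
proof (induction ks rule: rev_induct)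
  case Nil
  then show ?case by (simp add: lines_done_def)
next
  case (snoc k ks)
  then show ?case by (auto intro!: lines_done_snoc simp: sorted_wrt_append)
qed

lemma list_eq_backward_recursion:
  fixes x y :: "bool list"
  assumes "length x = m" "length y = m"
    and "\<And>e. e < m \<Longrightarrow> x ! e = F e (x ! (e+1))" "\<And>e. e < m \<Longrightarrow> y ! e = F e (y ! (e+1))"
    and "\<And>e a b. e + 1 \<ge> m \<Longrightarrow> F e a = F e b"
  shows "x = y"
proof -
  have "\<forall>e. m - n \<le> e \<longrightarrow> e < m \<longrightarrow> x ! e = y ! e" for n
  proof (induction n)
    case 0
    then show ?case by simp
  next
    case (Suc n)
    show ?case
    proof (intro allI impI)
      fix e assume e: "m - Suc n \<le> e" "e < m"
      show "x ! e = y ! e"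
      proof (cases "e + 1 < m")
        case True
        then have "x ! (e+1) = y ! (e+1)" using Suc e by auto
        then show ?thesis using assms(3)[OF e(2)] assms(4)[OF e(2)] by simp
      next
        case False
        then show ?thesis using assms(3,4,5)[of e] e by auto
      qed
    qed
  qed
  from this[of m] have "\<forall>e<m. x!e = y!e" by simp
  then show ?thesis using assms(1,2) by (intro nth_equalityI) auto
qed

lemma circuit_eq_circuit_rec:
  assumes "valid_order \<sigma> p" "length \<sigma> = m" "length u = m" "m \<ge> 1" "\<sigma> ! (m - 1) = R"
  shows "circuit p m u = circuit_rec \<sigma> u"
proof -
  define ks where "ks = sort_key p [1..<m]"
  have inj: "inj_on p {1..<m}" using assms unfolding valid_order_def by auto
  have sk: "set ks = {1..<m}" "distinct ks" unfolding ks_def by auto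
  have "sorted (map p ks)" unfolding ks_def by (rule sorted_sort_key)
  moreover have "distinct (map p ks)" using sk inj by (simp add: distinct_map)
  ultimately have "sorted_wrt (<) (map p ks)" by (simp add: strict_sorted_iff)
  then have sw: "sorted_wrt (\<lambda>i j. p i < p j) ks" by (simp add: sorted_wrt_map)
  have fc: "lines_done p ks u (fold update_line ks u)"
    using sk sw assms by (intro lines_done_fold) auto
  have key: "(e + 2 < m \<and> p (e+2) < p (e+1)) = (\<sigma> ! (e+1) = L)" if "e + 1 < m" for e
  proof (cases "e + 2 < m")
    case True
    then have "e + 2 \<in> {2..<m}" by simp
    then have "(\<sigma> ! (e+1) = L \<longrightarrow> p (e+2) < p (e+1)) \<and> (\<sigma> ! (e+1) = R \<longrightarrow> p (e+2) > p (e+1))"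
      using assms(1,2) unfolding valid_order_def by fastforce
    then show ?thesis using True by (cases "\<sigma> ! (e+1)") auto
  next
    case False
    then have "e + 1 = m - 1" using that by simp
    then show ?thesis using False assms(5) by simp
  qed
  define F where "F = (\<lambda>e a. if e + 1 < m then (u!e \<noteq> (if \<sigma> ! (e+1) = L then a else u!(e+1))) else u!e)"
  show ?thesis
    unfolding circuit_eq_fold ks_def[symmetric]
  proof (rule list_eq_backward_recursion[where F=F and m=m])
    show "length (fold update_line ks u) = m" using fc assms by (simp add: lines_done_def)
    show "length (circuit_rec \<sigma> u) = m" by (simp add: assms)
    fix e assume e: "e < m"
    show "fold update_line ks u ! e = F e (fold update_line ks u ! (e + 1))"
      using fc e assms(3) sk key[of e] unfolding F_def lines_done_def by auto
    show "circuit_rec \<sigma> u ! e = F e (circuit_rec \<sigma> u ! (e + 1))"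
      using nth_circuit_rec[of \<sigma> u e] e assms unfolding F_def by auto
  next
    fix e a b assume "m \<le> e + 1" then show "F e a = F e b" unfolding F_def by simp
  qed
qed

text \<open>\<open>circuit_prefix \<rho> l y\<close> is the output of the top lines, with pattern \<open>\<rho>\<close> and inputs \<open>l\<close>,
  when the bit added into the last of them from below is \<open>y\<close>; \<open>circuit_feed \<tau> r\<close> is the bit
  that lines with pattern \<open>\<tau>\<close> and inputs \<open>r\<close> add into the line just above them.\<close>

fun circuit_prefix :: "LR list \<Rightarrow> bool list \<Rightarrow> bool \<Rightarrow> bool list" where
  "circuit_prefix (s # t # \<sigma>) (a # c # l) y =
     (let r = circuit_prefix (t # \<sigma>) (c # l) y in (a \<noteq> (if t = L then hd r else c)) # r)"
| "circuit_prefix \<sigma> [a] y = [a \<noteq> y]"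
| "circuit_prefix \<sigma> l y = l"

lemma length_circuit_prefix [simp]: "length (circuit_prefix \<sigma> l y) = length l"
  by (induction \<sigma> l y rule: circuit_prefix.induct) (auto simp: Let_def)

lemma circuit_prefix_Cons_ne: "circuit_prefix \<sigma> (c # l) y \<noteq> []"
  by (metis length_circuit_prefix list.distinct(1) length_0_conv)

lemma last_circuit_prefix:
  "l \<noteq> [] \<Longrightarrow> length \<sigma> = length l \<Longrightarrow> last (circuit_prefix \<sigma> l y) = (last l \<noteq> y)"
  by (induction \<sigma> l y rule: circuit_prefix.induct) (auto simp: Let_def circuit_prefix_Cons_ne)

definition circuit_feed :: "LR list \<Rightarrow> bool list \<Rightarrow> bool" where
  "circuit_feed \<tau> r = (if r = [] then False else if hd \<tau> = L then hd (circuit_rec \<tau> r) else hd r)"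

lemma circuit_rec_Cons:
  "length \<tau> = length r \<Longrightarrow> circuit_rec (s # \<tau>) (a # r) = (a \<noteq> circuit_feed \<tau> r) # circuit_rec \<tau> r"
  by (cases \<tau>; cases r) (auto simp: circuit_feed_def Let_def)

lemma circuit_rec_append:
  "length \<sigma> = length l + length v \<Longrightarrow> v \<noteq> [] \<Longrightarrow>
   circuit_rec \<sigma> (l @ v) = circuit_prefix (take (length l) \<sigma>) l
     (if \<sigma> ! length l = L then hd (circuit_rec (drop (length l) \<sigma>) v) else hd v) @ circuit_rec (drop (length l) \<sigma>) v"
proof (induction l arbitrary: \<sigma>)
  case (Cons a l)
  obtain s \<sigma>' where \<sigma>: "\<sigma> = s # \<sigma>'" using Cons.prems by (cases \<sigma>) auto
  show ?case
  proof (cases l)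
    case Nil
    obtain c v' where v: "v = c # v'" using Cons.prems by (cases v) auto
    obtain t \<sigma>'' where \<sigma>': "\<sigma>' = t # \<sigma>''" using Cons.prems \<sigma> v Nil by (cases \<sigma>') auto
    show ?thesis using \<sigma> \<sigma>' v Nil by (simp add: Let_def)
  next
    case (Cons c l')
    obtain t \<sigma>'' where \<sigma>': "\<sigma>' = t # \<sigma>''" using Cons.prems \<sigma> Cons by (cases \<sigma>') auto
    have "take (length l) \<sigma>' = t # take (length l') \<sigma>''" using \<sigma>' Cons by simp
    then show ?thesis
      using Cons.IH[of \<sigma>'] Cons.prems unfolding \<sigma> \<sigma>' Cons
      by (simp add: Let_def hd_append2 circuit_prefix_Cons_ne)
  qed
qed simp

lemma circuit_rec_split:
  assumes "length \<sigma> = length l + 1 + length r"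
  shows "circuit_rec \<sigma> (l @ b # r) = circuit_prefix (take (length l) \<sigma>) l
           (if \<sigma> ! length l = L then (b \<noteq> circuit_feed (drop (Suc (length l)) \<sigma>) r) else b)
         @ (b \<noteq> circuit_feed (drop (Suc (length l)) \<sigma>) r) # circuit_rec (drop (Suc (length l)) \<sigma>) r"
proof -
  obtain s \<tau> where d: "drop (length l) \<sigma> = s # \<tau>" using assms by (cases "drop (length l) \<sigma>") auto
  have "drop (Suc (length l)) \<sigma> = tl (drop (length l) \<sigma>)" by (simp add: drop_Suc tl_drop)
  then have \<tau>: "\<tau> = drop (Suc (length l)) \<sigma>" using d by simp
  have "length (drop (length l) \<sigma>) = length r + 1" using assms by simp
  then have lt: "length \<tau> = length r" using d by simp
  have c: "circuit_rec (drop (length l) \<sigma>) (b # r) = (b \<noteq> circuit_feed \<tau> r) # circuit_rec \<tau> r"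
    unfolding d by (rule circuit_rec_Cons[OF lt])
  show ?thesis
    using circuit_rec_append[of \<sigma> l "b # r"] assms unfolding c \<tau> by simp
qed


abbreviation coin :: "bool pmf" where "coin \<equiv> pmf_of_set UNIV"

definition unif_bits :: "nat \<Rightarrow> bool list pmf" where
  "unif_bits n = pmf_of_set {xs. length xs = n}"

definition outputs :: "'z channel \<Rightarrow> bool list \<Rightarrow> 'z list pmf" where
  "outputs W xs = chan_out (\<lambda>_. W) 1 xs"

lemma chan_out_const_shift: "chan_out (\<lambda>_. W) k xs = chan_out (\<lambda>_. W) 1 xs"
proof (induction xs arbitrary: k)
  case (Cons x xs)
  have "chan_out (\<lambda>_. W) (Suc k) xs = chan_out (\<lambda>_. W) (Suc (Suc 0)) xs"
    using Cons.IH[of "Suc k"] Cons.IH[of "Suc (Suc 0)"] by simp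
  then show ?case by simp
qed simp

lemma Cons_append_fun: "((@) (x # xs)) = (\<lambda>b. x # (xs @ b))"
  by auto

lemma outputs_Nil [simp]: "outputs W [] = return_pmf []"
  unfolding outputs_def by simp

lemma outputs_Cons: "outputs W (x # xs) = bind_pmf (W x) (\<lambda>z. map_pmf (Cons z) (outputs W xs))"
  unfolding outputs_def by (simp add: chan_out_const_shift[of W "Suc (Suc 0)"] map_pmf_def)

lemma outputs_append: "outputs W (xs @ ys) = bind_pmf (outputs W xs) (\<lambda>a. map_pmf (\<lambda>b. a @ b) (outputs W ys))"
proof (induction xs)
  case Nil
  then show ?case by (simp add: bind_return_pmf map_pmf_idI)
next
  case (Cons x xs)
  show ?case
    by (simp add: outputs_Cons Cons bind_assoc_pmf map_bind_pmf bind_map_pmf map_pmf_comp Cons_append_fun)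
qed

lemma length_of_set_outputs: "zs \<in> set_pmf (outputs W xs) \<Longrightarrow> length zs = length xs"
proof (induction xs arbitrary: zs)
  case Nil
  then show ?case by simp
next
  case (Cons x xs)
  then show ?case by (auto simp: outputs_Cons)
qed

lemma pmf_bind_map_Cons: "pmf (bind_pmf M (\<lambda>z. map_pmf (Cons z) N)) (z # zs) = pmf M z * pmf N zs"
proof -
  have "bind_pmf M (\<lambda>z. map_pmf (Cons z) N) = map_pmf (\<lambda>(a,b). a # b) (pair_pmf M N)"
    by (simp add: pair_pmf_def map_bind_pmf map_pmf_def bind_assoc_pmf bind_return_pmf)
  moreover have "pmf (map_pmf (\<lambda>(a,b). a # b) (pair_pmf M N)) ((\<lambda>(a,b). a # b) (z, zs)) = pmf (pair_pmf M N) (z, zs)"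
    by (rule pmf_map_inj') (auto simp: inj_def)
  ultimately show ?thesis by (simp add: pmf_pair)
qed

lemma pmf_outputs_Cons: "pmf (outputs W (x # xs)) (z # zs) = pmf (W x) z * pmf (outputs W xs) zs"
  unfolding outputs_Cons by (rule pmf_bind_map_Cons)

lemma pmf_outputs_replicate_pos:
  assumes "\<And>x. pmf (W x) z > 0"
  shows "pmf (outputs W xs) (replicate (length xs) z) > 0"
  by (induction xs) (simp_all add: pmf_outputs_Cons assms)

lemma map_last_outputs: "xs \<noteq> [] \<Longrightarrow> map_pmf last (outputs W xs) = W (last xs)"
proof (induction xs)
  case Nil
  then show ?case by simp
next
  case (Cons x xs)
  show ?case
  proof (cases "xs = []")
    case True
    then show ?thesis by (simp add: outputs_Cons map_bind_pmf map_pmf_comp bind_return_pmf')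
  next
    case False
    have "map_pmf last (outputs W (x # xs)) = bind_pmf (W x) (\<lambda>z. map_pmf (\<lambda>zs. last (z # zs)) (outputs W xs))"
      by (simp add: outputs_Cons map_bind_pmf map_pmf_comp)
    also have "\<dots> = bind_pmf (W x) (\<lambda>z. map_pmf last (outputs W xs))"
    proof (intro bind_pmf_cong refl map_pmf_cong)
      fix z zs assume "zs \<in> set_pmf (outputs W xs)"
      then have "zs \<noteq> []" using length_of_set_outputs[of zs W xs] False by auto
      then show "last (z # zs) = last zs" by simp
    qed
    also have "\<dots> = W (last xs)" using Cons False by simp
    finally show ?thesis using False by simp
  qed
qed

lemma map_hd_outputs: "map_pmf hd (outputs W (x # xs)) = W x"
  by (simp add: outputs_Cons map_bind_pmf map_pmf_comp bind_return_pmf')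

lemma card_bool_lists: "card {xs :: bool list. length xs = n} = 2 ^ n"
  using card_lists_length_eq[of "UNIV :: bool set" n] by simp

lemma finite_bool_lists: "finite {xs :: bool list. length xs = n}"
  using finite_lists_length_eq[of "UNIV :: bool set" n] by simp

lemma bool_lists_nonempty: "{xs :: bool list. length xs = n} \<noteq> {}"
  by (metis (mono_tags, lifting) empty_Collect_eq length_replicate)

lemma pmf_unif_bits: "pmf (unif_bits n) xs = (if length xs = n then 1 / 2 ^ n else 0)"
  unfolding unif_bits_def using finite_bool_lists[of n] bool_lists_nonempty[of n] by (simp add: card_bool_lists)

lemma set_unif_bits: "set_pmf (unif_bits n) = {xs. length xs = n}"
  unfolding unif_bits_def using finite_bool_lists[of n] bool_lists_nonempty[of n] by simp

lemma unif_bits_0: "unif_bits 0 = return_pmf []"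
  by (rule pmf_eqI) (auto simp: pmf_unif_bits)

lemma unif_bits_Suc: "unif_bits (Suc n) = bind_pmf coin (\<lambda>a. map_pmf (Cons a) (unif_bits n))"
proof (rule pmf_eqI)
  fix xs :: "bool list"
  have r: "pmf (bind_pmf coin (\<lambda>a. map_pmf (Cons a) (unif_bits n))) xs = (\<Sum>a\<in>UNIV. pmf (map_pmf (Cons a) (unif_bits n)) xs) / 2"
    by (subst pmf_bind_pmf_of_set) (auto simp: UNIV_bool)
  show "pmf (unif_bits (Suc n)) xs = pmf (bind_pmf coin (\<lambda>a. map_pmf (Cons a) (unif_bits n))) xs"
  proof (cases xs)
    case Nil
    have "pmf (map_pmf (Cons a) (unif_bits n)) [] = 0" for a by (rule pmf_map_outside) auto
    then show ?thesis unfolding r using Nil by (simp add: pmf_unif_bits)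
  next
    case (Cons y ys)
    have "pmf (map_pmf (Cons a) (unif_bits n)) (y # ys) = (if a = y then pmf (unif_bits n) ys else 0)" for a
    proof (cases "a = y")
      case True
      then show ?thesis by (simp add: pmf_map_inj')
    next
      case False
      then show ?thesis by (subst pmf_map_outside) auto
    qed
    then show ?thesis unfolding r using Cons by (simp add: pmf_unif_bits UNIV_bool)
  qed
qed

lemma map_xor_coin: "map_pmf (\<lambda>c. c \<noteq> d) coin = coin"
proof -
  have "(\<lambda>c. c \<noteq> d) ` UNIV = UNIV" by (auto intro: image_eqI[where x="_ \<noteq> d"])
  then show ?thesis by (subst map_pmf_of_set_inj) (auto simp: inj_on_def)
qed

lemma map_last_unif_bits: "map_pmf last (unif_bits (Suc n)) = coin"
proof (induction n)
  case 0
  have "map_pmf last (unif_bits (Suc 0)) = bind_pmf coin (\<lambda>a. map_pmf last (map_pmf (Cons a) (return_pmf [])))"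
    by (simp only: unif_bits_Suc unif_bits_0 map_bind_pmf)
  also have "\<dots> = bind_pmf coin return_pmf" by simp
  finally show ?case by (simp add: bind_return_pmf')
next
  case (Suc n)
  have "map_pmf last (unif_bits (Suc (Suc n))) = bind_pmf coin (\<lambda>a. map_pmf last (unif_bits (Suc n)))"
  proof -
    have "map_pmf last (unif_bits (Suc (Suc n))) = bind_pmf coin (\<lambda>a. map_pmf (\<lambda>xs. last (a # xs)) (unif_bits (Suc n)))"
      by (simp add: unif_bits_Suc[of "Suc n"] map_bind_pmf map_pmf_comp)
    also have "\<dots> = bind_pmf coin (\<lambda>a. map_pmf last (unif_bits (Suc n)))"
      by (intro bind_pmf_cong refl map_pmf_cong) (auto simp: set_unif_bits)
    finally show ?thesis .
  qed
  then show ?case using Suc by simp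
qed

lemma bind_coin_xor: "bind_pmf coin (\<lambda>c. f (c \<noteq> d)) = bind_pmf coin f"
proof -
  have "bind_pmf coin (\<lambda>c. f (c \<noteq> d)) = bind_pmf (map_pmf (\<lambda>c. c \<noteq> d) coin) f"
    by (simp only: bind_map_pmf)
  also have "\<dots> = bind_pmf coin f" by (simp only: map_xor_coin)
  finally show ?thesis .
qed

lemma pmf_of_set_Times:
  assumes "finite A" "A \<noteq> {}" "finite B" "B \<noteq> {}"
  shows "pmf_of_set (A \<times> B) = pair_pmf (pmf_of_set A) (pmf_of_set B)"
proof (rule pmf_eqI)
  fix x :: "'a \<times> 'b"
  obtain a b where x: "x = (a, b)" by (cases x)
  have c: "card (A \<times> B) = card A * card B" by (rule card_cartesian_product)
  show "pmf (pmf_of_set (A \<times> B)) x = pmf (pair_pmf (pmf_of_set A) (pmf_of_set B)) x"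
    unfolding x pmf_pair using assms by (simp add: c split: split_indicator)
qed

lemma pmf_of_set_fixed_entry:
  assumes "1 \<le> k" "k \<le> m"
  shows "pmf_of_set {us :: bool list. length us = m \<and> us ! (k - 1) = b} =
    bind_pmf (unif_bits (k - 1)) (\<lambda>l. map_pmf (\<lambda>r. l @ b # r) (unif_bits (m - k)))"
proof -
  define A where "A = {xs :: bool list. length xs = k - 1}"
  define B where "B = {xs :: bool list. length xs = m - k}"
  define f where "f = (\<lambda>(l, r). l @ b # r)"
  have inj: "inj_on f (A \<times> B)" unfolding f_def A_def by (auto simp: inj_on_def)
  have img: "f ` (A \<times> B) = {us. length us = m \<and> us ! (k - 1) = b}"
  proof
    show "f ` (A \<times> B) \<subseteq> {us. length us = m \<and> us ! (k - 1) = b}"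
      using assms unfolding f_def A_def B_def by (auto simp: nth_append)
    show "{us. length us = m \<and> us ! (k - 1) = b} \<subseteq> f ` (A \<times> B)"
    proof
      fix us assume "us \<in> {us. length us = m \<and> us ! (k - 1) = b}"
      then have us: "length us = m" "us ! (k - 1) = b" by auto
      have "us = take (k-1) us @ us ! (k-1) # drop (Suc (k-1)) us"
        by (rule id_take_nth_drop) (use us assms in simp)
      then have "us = take (k-1) us @ b # drop k us" using us assms by simp
      moreover have "(take (k-1) us, drop k us) \<in> A \<times> B" using us assms unfolding A_def B_def by auto
      ultimately show "us \<in> f ` (A \<times> B)" unfolding f_def by (metis (no_types, lifting) case_prod_conv image_eqI)
    qed
  qed
  have fA: "finite A" "A \<noteq> {}" "finite B" "B \<noteq> {}"
    unfolding A_def B_def using finite_bool_lists bool_lists_nonempty by auto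
  have "pmf_of_set {us. length us = m \<and> us ! (k - 1) = b} = map_pmf f (pmf_of_set (A \<times> B))"
    using map_pmf_of_set_inj[OF inj] fA img by simp
  also have "\<dots> = map_pmf f (pair_pmf (unif_bits (k-1)) (unif_bits (m-k)))"
    using pmf_of_set_Times[OF fA] unfolding unif_bits_def A_def B_def by simp
  also have "\<dots> = bind_pmf (unif_bits (k - 1)) (\<lambda>l. map_pmf (\<lambda>r. l @ b # r) (unif_bits (m - k)))"
    unfolding f_def by (simp add: pair_pmf_def map_bind_pmf map_pmf_def bind_assoc_pmf bind_return_pmf)
  finally show ?thesis .
qed


lemma pmf_bind_coin: "pmf (bind_pmf coin f) x = (pmf (f False) x + pmf (f True) x) / 2"
  using pmf_bind_pmf_of_set[of "UNIV :: bool set" f x] by (simp add: UNIV_bool)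

lemma bind_unif_bits_Suc:
  "bind_pmf (unif_bits (Suc n)) f = bind_pmf coin (\<lambda>c. bind_pmf (unif_bits n) (\<lambda>r. f (c # r)))"
  by (simp add: unif_bits_Suc bind_assoc_pmf bind_map_pmf)

lemma synth_eq_bind_circuit_rec:
  assumes "valid_order \<sigma> p" "length \<sigma> = m" "\<sigma> ! (m - 1) = R" "1 \<le> k" "k \<le> m"
  shows "synth (\<lambda>_. W) m p k b = bind_pmf (unif_bits (k - 1)) (\<lambda>l. bind_pmf (unif_bits (m - k))
            (\<lambda>r. map_pmf (\<lambda>zs. (zs, l)) (outputs W (circuit_rec \<sigma> (l @ b # r)))))"
  unfolding synth_def pmf_of_set_fixed_entry[OF assms(4,5)] bind_assoc_pmf bind_map_pmf
proof (intro bind_pmf_cong refl)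
  fix l r assume "l \<in> set_pmf (unif_bits (k - 1))" "r \<in> set_pmf (unif_bits (m - k))"
  then have len: "length l = k - 1" "length r = m - k" by (auto simp: set_unif_bits)
  have "circuit p m (l @ b # r) = circuit_rec \<sigma> (l @ b # r)"
    by (rule circuit_eq_circuit_rec) (use assms len in auto)
  then show "map_pmf (\<lambda>zs. (zs, take (k - 1) (l @ b # r))) (chan_out (\<lambda>_. W) 1 (circuit p m (l @ b # r))) =
      map_pmf (\<lambda>zs. (zs, l)) (outputs W (circuit_rec \<sigma> (l @ b # r)))"
    using len by (simp add: outputs_def)
qed

definition masked :: "'z channel \<Rightarrow> (bool \<times> 'z) channel" where
  "masked V b = bind_pmf coin (\<lambda>v. map_pmf (Pair v) (V (b \<noteq> v)))"

lemma sym_cap_masked_channel: "sym_cap (masked V) = sym_cap V"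
  using sym_cap_masked[of "UNIV :: bool set" V id] unfolding masked_def by simp

lemma pmf_masked: "pmf (masked V b) (v, z) = pmf (V (b \<noteq> v)) z / 2"
  unfolding masked_def pmf_bind_coin pmf_map_Pair by (cases v) simp_all

text \<open>The outputs of lines \<open>k, \<dots>, m\<close> when \<open>u\<^sub>k = b\<close>, where \<open>\<tau>\<close> is the pattern of the lines
  below line \<open>k\<close>.\<close>

definition suffix_channel :: "'z channel \<Rightarrow> LR list \<Rightarrow> bool \<Rightarrow> 'z list pmf" where
  "suffix_channel W \<tau> b = bind_pmf (unif_bits (length \<tau>)) (\<lambda>r. outputs W ((b \<noteq> circuit_feed \<tau> r) # circuit_rec \<tau> r))"

lemma circuit_feed_R: "circuit_feed (R # \<tau>) (c # r) = c"
  by (simp add: circuit_feed_def)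

lemma circuit_feed_L: "length \<tau> = length r \<Longrightarrow> circuit_feed (L # \<tau>) (c # r) = (c \<noteq> circuit_feed \<tau> r)"
  by (simp add: circuit_feed_def circuit_rec_Cons)

lemma suffix_channel_Nil: "suffix_channel W [] b = outputs W [b]"
  by (simp add: suffix_channel_def unif_bits_0 bind_return_pmf circuit_feed_def)

lemma suffix_channel_R_Cons:
  "suffix_channel W (R # \<tau>) b =
     bind_pmf coin (\<lambda>c. bind_pmf (W (b \<noteq> c)) (\<lambda>z. map_pmf (Cons z) (suffix_channel W \<tau> c)))"
proof -
  have "suffix_channel W (R # \<tau>) b = bind_pmf coin (\<lambda>c. bind_pmf (unif_bits (length \<tau>))
      (\<lambda>r. bind_pmf (W (b \<noteq> c)) (\<lambda>z. map_pmf (Cons z) (outputs W ((c \<noteq> circuit_feed \<tau> r) # circuit_rec \<tau> r)))))"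
    unfolding suffix_channel_def length_Cons bind_unif_bits_Suc
    by (intro bind_pmf_cong refl) (simp add: set_unif_bits circuit_feed_R circuit_rec_Cons outputs_Cons)
  also have "\<dots> = bind_pmf coin (\<lambda>c. bind_pmf (W (b \<noteq> c)) (\<lambda>z. map_pmf (Cons z) (suffix_channel W \<tau> c)))"
    unfolding suffix_channel_def map_bind_pmf by (subst bind_commute_pmf) (rule refl)
  finally show ?thesis .
qed

lemma suffix_channel_L_Cons:
  fixes W :: "'z channel" and \<tau> :: "LR list"
  defines "T \<equiv> bind_pmf (unif_bits (length \<tau>)) (\<lambda>r. outputs W (circuit_rec \<tau> r))"
  shows "suffix_channel W (L # \<tau>) b = bind_pmf coin (\<lambda>c. bind_pmf (W (b \<noteq> c)) (\<lambda>z1.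
     map_pmf (Cons z1) (bind_pmf (W c) (\<lambda>z2. map_pmf (Cons z2) T))))"
proof -
  define F where "F = (\<lambda>c r. outputs W ((b \<noteq> c) # c # circuit_rec \<tau> r))"
  have "suffix_channel W (L # \<tau>) b =
      bind_pmf coin (\<lambda>c. bind_pmf (unif_bits (length \<tau>)) (\<lambda>r. F (c \<noteq> circuit_feed \<tau> r) r))"
    unfolding suffix_channel_def length_Cons bind_unif_bits_Suc F_def
    by (intro bind_pmf_cong refl) (simp add: set_unif_bits circuit_feed_L circuit_rec_Cons)
  also have "\<dots> = bind_pmf (unif_bits (length \<tau>)) (\<lambda>r. bind_pmf coin (\<lambda>c. F (c \<noteq> circuit_feed \<tau> r) r))"
    by (rule bind_commute_pmf)
  also have "\<dots> = bind_pmf (unif_bits (length \<tau>)) (\<lambda>r. bind_pmf coin (\<lambda>c. F c r))"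
    using bind_coin_xor[of "\<lambda>c. F c r" "circuit_feed \<tau> r" for r] by simp
  also have "\<dots> = bind_pmf coin (\<lambda>c. bind_pmf (unif_bits (length \<tau>)) (F c))"
    by (rule bind_commute_pmf)
  also have "\<dots> = bind_pmf coin (\<lambda>c. bind_pmf (W (b \<noteq> c)) (\<lambda>z1.
      map_pmf (Cons z1) (bind_pmf (W c) (\<lambda>z2. map_pmf (Cons z2) T))))"
  proof (rule bind_pmf_cong[OF refl])
    fix c
    have "bind_pmf (unif_bits (length \<tau>)) (F c) = bind_pmf (unif_bits (length \<tau>)) (\<lambda>r. bind_pmf (W (b \<noteq> c))
        (\<lambda>z1. bind_pmf (W c) (\<lambda>z2. map_pmf (Cons z1) (map_pmf (Cons z2) (outputs W (circuit_rec \<tau> r))))))"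
      unfolding F_def outputs_Cons map_bind_pmf ..
    also have "\<dots> = bind_pmf (W (b \<noteq> c)) (\<lambda>z1. bind_pmf (W c) (\<lambda>z2. bind_pmf (unif_bits (length \<tau>))
        (\<lambda>r. map_pmf (Cons z1) (map_pmf (Cons z2) (outputs W (circuit_rec \<tau> r))))))"
      by (subst bind_commute_pmf) (subst bind_commute_pmf, rule refl)
    also have "\<dots> = bind_pmf (W (b \<noteq> c)) (\<lambda>z1.
        map_pmf (Cons z1) (bind_pmf (W c) (\<lambda>z2. map_pmf (Cons z2) T)))"
      unfolding T_def map_bind_pmf ..
    finally show "bind_pmf (unif_bits (length \<tau>)) (F c) = bind_pmf (W (b \<noteq> c)) (\<lambda>z1.
        map_pmf (Cons z1) (bind_pmf (W c) (\<lambda>z2. map_pmf (Cons z2) T)))" .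
  qed
  finally show ?thesis .
qed

lemma suffix_channel_R_Cons_inputs_differ:
  assumes "W True \<noteq> W False" "suffix_channel W \<tau> True \<noteq> suffix_channel W \<tau> False"
  shows "suffix_channel W (R # \<tau>) True \<noteq> suffix_channel W (R # \<tau>) False"
proof -
  obtain z where "pmf (W True) z \<noteq> pmf (W False) z" using assms(1) by (auto simp: pmf_eq_iff)
  moreover obtain zs where "pmf (suffix_channel W \<tau> True) zs \<noteq> pmf (suffix_channel W \<tau> False) zs"
    using assms(2) by (auto simp: pmf_eq_iff)
  moreover define a a' x y where "a = pmf (W True) z" and "a' = pmf (W False) z"
    and "x = pmf (suffix_channel W \<tau> True) zs" and "y = pmf (suffix_channel W \<tau> False) zs"
  ultimately have "(a - a') * (y - x) / 2 \<noteq> 0" by simp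
  moreover have "pmf (suffix_channel W (R # \<tau>) c) (z # zs) = (pmf (W c) z * y + pmf (W (\<not> c)) z * x) / 2" for c
    unfolding suffix_channel_R_Cons pmf_bind_coin pmf_bind_map_Cons x_def y_def by simp
  then have "pmf (suffix_channel W (R # \<tau>) True) (z # zs) - pmf (suffix_channel W (R # \<tau>) False) (z # zs)
      = (a - a') * (y - x) / 2"
    unfolding a_def a'_def by (simp add: algebra_simps)
  ultimately show ?thesis by auto
qed

lemma suffix_channel_L_Cons_inputs_differ:
  assumes "W True \<noteq> W False"
  shows "suffix_channel W (L # \<tau>) True \<noteq> suffix_channel W (L # \<tau>) False"
proof -
  define T where "T = bind_pmf (unif_bits (length \<tau>)) (\<lambda>r. outputs W (circuit_rec \<tau> r))"
  obtain z where "pmf (W True) z \<noteq> pmf (W False) z" using assms by (auto simp: pmf_eq_iff)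
  moreover obtain zs where "zs \<in> set_pmf T" using set_pmf_not_empty[of T] by blast
  moreover define a a' where "a = pmf (W True) z" and "a' = pmf (W False) z"
  ultimately have "- ((a - a') * (a - a') * pmf T zs) / 2 \<noteq> 0" by (simp add: set_pmf_eq')
  moreover have "pmf (suffix_channel W (L # \<tau>) c) (z # z # zs) =
      (pmf (W c) z * a' + pmf (W (\<not> c)) z * a) * pmf T zs / 2" for c
    unfolding suffix_channel_L_Cons pmf_bind_coin pmf_bind_map_Cons T_def a_def a'_def by (simp add: field_simps)
  then have "pmf (suffix_channel W (L # \<tau>) True) (z # z # zs) - pmf (suffix_channel W (L # \<tau>) False) (z # z # zs)
      = - ((a - a') * (a - a') * pmf T zs) / 2"
    unfolding a_def a'_def by (simp add: algebra_simps)
  ultimately show ?thesis by auto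
qed

lemma suffix_channel_inputs_differ:
  assumes "W True \<noteq> W False"
  shows "suffix_channel W \<tau> True \<noteq> suffix_channel W \<tau> False"
proof (induction \<tau>)
  case Nil
  obtain z where "pmf (W True) z \<noteq> pmf (W False) z" using assms by (auto simp: pmf_eq_iff)
  moreover have "pmf (suffix_channel W [] c) [z] = pmf (W c) z" for c
    by (simp add: suffix_channel_Nil pmf_outputs_Cons)
  ultimately show ?case by metis
next
  case (Cons t \<tau>)
  show ?case
  proof (cases t)
    case R
    then show ?thesis using suffix_channel_R_Cons_inputs_differ[OF assms Cons.IH] by simp
  next
    case L
    then show ?thesis using suffix_channel_L_Cons_inputs_differ[OF assms] by simp
  qed
qed

section \<open>Lines of type R\<close>

lemma bind_last_outputs_circuit_prefix:
  assumes "length \<rho> = Suc n"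
  shows "bind_pmf (unif_bits (Suc n)) (\<lambda>l. map_pmf (\<lambda>a. (last l, last a)) (outputs W (circuit_prefix \<rho> l b)))
    = masked W b"
proof -
  have "bind_pmf (unif_bits (Suc n)) (\<lambda>l. map_pmf (\<lambda>a. (last l, last a)) (outputs W (circuit_prefix \<rho> l b)))
      = bind_pmf (unif_bits (Suc n)) (\<lambda>l. map_pmf (Pair (last l)) (W (b \<noteq> last l)))"
  proof (intro bind_pmf_cong refl)
    fix l assume "l \<in> set_pmf (unif_bits (Suc n))"
    then have len: "length l = Suc n" by (simp add: set_unif_bits)
    then have "circuit_prefix \<rho> l b \<noteq> []" "last (circuit_prefix \<rho> l b) = (b \<noteq> last l)"
      using assms last_circuit_prefix[of l \<rho> b] by (auto simp flip: length_0_conv)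
    then show "map_pmf (\<lambda>a. (last l, last a)) (outputs W (circuit_prefix \<rho> l b)) =
        map_pmf (Pair (last l)) (W (b \<noteq> last l))"
      using map_last_outputs[of "circuit_prefix \<rho> l b" W] by (simp add: map_pmf_comp[symmetric, of "Pair (last l)" last])
  qed
  also have "\<dots> = bind_pmf (map_pmf last (unif_bits (Suc n))) (\<lambda>v. map_pmf (Pair v) (W (b \<noteq> v)))"
    by (simp add: bind_map_pmf)
  also have "\<dots> = masked W b"
    by (simp add: map_last_unif_bits masked_def)
  finally show ?thesis .
qed

text \<open>For a line \<open>k \<ge> 2\<close> of type R we have \<open>x\<^sub>k\<^sub>-\<^sub>1 = u\<^sub>k\<^sub>-\<^sub>1 + u\<^sub>k\<close>, so \<open>(u\<^sub>k\<^sub>-\<^sub>1, z\<^sub>k\<^sub>-\<^sub>1)\<close> is a masked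
  copy of \<open>W\<close>, independent of the outputs \<open>z\<^sub>k, \<dots>, z\<^sub>m\<close>.\<close>

lemma map_synth_R_line:
  assumes "valid_order \<sigma> p" "length \<sigma> = m" "\<sigma> ! (m - 1) = R" "2 \<le> k" "k \<le> m" "\<sigma> ! (k - 1) = R"
  shows "map_pmf (\<lambda>(zs, l). ((last l, last (take (k - 1) zs)), drop (k - 1) zs)) (synth (\<lambda>_. W) m p k b)
       = pair_pmf (masked W b) (suffix_channel W (drop k \<sigma>) b)"
proof -
  define A where "A = (\<lambda>l. circuit_prefix (take (k - 1) \<sigma>) l b)"
  define B where "B = (\<lambda>r. (b \<noteq> circuit_feed (drop k \<sigma>) r) # circuit_rec (drop k \<sigma>) r)"
  define g where "g = (\<lambda>(zs :: 'a list, l :: bool list). ((last l, last (take (k - 1) zs)), drop (k - 1) zs))"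
  have synth_eq: "synth (\<lambda>_. W) m p k b = bind_pmf (unif_bits (k - 1)) (\<lambda>l. bind_pmf (unif_bits (m - k))
      (\<lambda>r. map_pmf (\<lambda>zs. (zs, l)) (outputs W (circuit_rec \<sigma> (l @ b # r)))))"
    by (rule synth_eq_bind_circuit_rec) (use assms in auto)
  have "map_pmf g (synth (\<lambda>_. W) m p k b) = bind_pmf (unif_bits (k - 1)) (\<lambda>l. bind_pmf (unif_bits (m - k))
      (\<lambda>r. bind_pmf (outputs W (A l)) (\<lambda>a. map_pmf (\<lambda>c. ((last l, last a), c)) (outputs W (B r)))))"
    unfolding synth_eq map_bind_pmf
  proof (intro bind_pmf_cong refl)
    fix l r assume "l \<in> set_pmf (unif_bits (k - 1))" "r \<in> set_pmf (unif_bits (m - k))"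
    then have len: "length l = k - 1" "length r = m - k" by (auto simp: set_unif_bits)
    then have split: "circuit_rec \<sigma> (l @ b # r) = A l @ B r"
      using circuit_rec_split[of \<sigma> l r b] assms unfolding A_def B_def by simp
    have g_eq: "g (a @ c, l) = ((last l, last a), c)" if "a \<in> set_pmf (outputs W (A l))" for a c
      using length_of_set_outputs[OF that] len unfolding A_def g_def by simp
    have "map_pmf g (map_pmf (\<lambda>zs. (zs, l)) (outputs W (circuit_rec \<sigma> (l @ b # r)))) =
        bind_pmf (outputs W (A l)) (\<lambda>a. map_pmf (\<lambda>c. g (a @ c, l)) (outputs W (B r)))"
      unfolding split outputs_append map_pmf_comp map_bind_pmf by simp
    also have "\<dots> = bind_pmf (outputs W (A l)) (\<lambda>a. map_pmf (\<lambda>c. ((last l, last a), c)) (outputs W (B r)))"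
      using g_eq by (intro bind_pmf_cong refl map_pmf_cong) auto
    finally show "map_pmf g (map_pmf (\<lambda>zs. (zs, l)) (outputs W (circuit_rec \<sigma> (l @ b # r)))) =
        bind_pmf (outputs W (A l)) (\<lambda>a. map_pmf (\<lambda>c. ((last l, last a), c)) (outputs W (B r)))" .
  qed
  also have "\<dots> = bind_pmf (unif_bits (k - 1)) (\<lambda>l. bind_pmf (outputs W (A l))
      (\<lambda>a. map_pmf (\<lambda>c. ((last l, last a), c)) (suffix_channel W (drop k \<sigma>) b)))"
    using assms unfolding suffix_channel_def B_def map_bind_pmf
    by (subst bind_commute_pmf) simp
  also have "\<dots> = bind_pmf (bind_pmf (unif_bits (k - 1)) (\<lambda>l. map_pmf (\<lambda>a. (last l, last a)) (outputs W (A l))))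
       (\<lambda>ob. map_pmf (Pair ob) (suffix_channel W (drop k \<sigma>) b))"
    by (simp add: bind_assoc_pmf bind_map_pmf)
  also have "bind_pmf (unif_bits (k - 1)) (\<lambda>l. map_pmf (\<lambda>a. (last l, last a)) (outputs W (A l))) = masked W b"
    using bind_last_outputs_circuit_prefix[of "take (k - 1) \<sigma>" "k - 2" W b] assms
    unfolding A_def by (simp add: Suc_diff_Suc numeral_2_eq_2)
  finally show ?thesis unfolding g_def pair_pmf_def map_pmf_def .
qed


lemma sym_cap_synth_R_line:
  assumes "valid_order \<sigma> p" "length \<sigma> = m" "\<sigma> ! (m - 1) = R" "2 \<le> k" "k \<le> m" "\<sigma> ! (k - 1) = R"
  shows "sym_cap W \<le> sym_cap (synth (\<lambda>_. W) m p k)"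
    and "sym_cap W \<notin> {0, 1} \<Longrightarrow> sym_cap W < sym_cap (synth (\<lambda>_. W) m p k)"
proof -
  define PX where "PX = (\<lambda>b. pair_pmf (masked W b) (suffix_channel W (drop k \<sigma>) b))"
  have "PX = (\<lambda>b. map_pmf (\<lambda>(zs, l). ((last l, last (take (k - 1) zs)), drop (k - 1) zs)) (synth (\<lambda>_. W) m p k b))"
    unfolding PX_def map_synth_R_line[OF assms] ..
  then have "sym_cap PX \<le> sym_cap (synth (\<lambda>_. W) m p k)"
    by (simp only: sym_cap_map_le)
  moreover have "sym_cap W \<le> sym_cap PX"
    using sym_cap_map_le[of fst PX] sym_cap_masked_channel[of W] unfolding PX_def by (simp add: map_fst_pair_pmf)
  ultimately show "sym_cap W \<le> sym_cap (synth (\<lambda>_. W) m p k)" by simp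
  assume "sym_cap W \<notin> {0, 1}"
  then obtain z where z: "pmf (W True) z > 0" "pmf (W False) z > 0"
    using sym_cap_neq_1_imp_common_output by blast
  have "sym_cap (masked W) < sym_cap PX"
    unfolding PX_def
  proof (rule sym_cap_less_pair[where y="(False, z)"])
    show "suffix_channel W (drop k \<sigma>) True \<noteq> suffix_channel W (drop k \<sigma>) False"
      using \<open>sym_cap W \<notin> {0, 1}\<close> by (intro suffix_channel_inputs_differ sym_cap_neq_0_imp_inputs_differ) simp
  qed (use z in \<open>simp_all add: pmf_masked\<close>)
  with \<open>sym_cap PX \<le> sym_cap (synth (\<lambda>_. W) m p k)\<close>
  show "sym_cap W < sym_cap (synth (\<lambda>_. W) m p k)" by (simp add: sym_cap_masked_channel)
qed


section \<open>Lines of type L\<close>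

text \<open>Outputs \<open>z\<^sub>1, \<dots>, z\<^sub>n\<^sub>+\<^sub>1\<close> and inputs \<open>u\<^sub>1, \<dots>, u\<^sub>n\<close> of the lines above and at a line of type L
  whose output bit is \<open>v\<close>.\<close>

definition prefix_channel :: "'z channel \<Rightarrow> LR list \<Rightarrow> nat \<Rightarrow> bool \<Rightarrow> ('z list \<times> bool list) pmf" where
  "prefix_channel W \<rho> n v =
     bind_pmf (unif_bits n) (\<lambda>l. map_pmf (\<lambda>zs. (zs, l)) (outputs W (circuit_prefix \<rho> l v @ [v])))"

text \<open>The lines below a line \<open>k\<close> of type L, seen as a channel with input the bit \<open>n\<close> that
  line \<open>k+1\<close> adds into line \<open>k\<close> (the index \<open>k\<close> of \<open>\<sigma>\<close> is line \<open>k+1\<close>).\<close>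

definition below_offset :: "LR list \<Rightarrow> nat \<Rightarrow> bool list \<Rightarrow> bool" where
  "below_offset \<sigma> k r = (if \<sigma> ! k = L then False else circuit_feed (drop (Suc k) \<sigma>) r)"

definition below_channel :: "'z channel \<Rightarrow> LR list \<Rightarrow> nat \<Rightarrow> bool \<Rightarrow> 'z list pmf" where
  "below_channel W \<sigma> k n = bind_pmf (unif_bits (length \<sigma> - k - 1))
     (\<lambda>r. outputs W ((n \<noteq> below_offset \<sigma> k r) # circuit_rec (drop (Suc k) \<sigma>) r))"

definition attach_prefix ::
    "'z channel \<Rightarrow> LR list \<Rightarrow> nat \<Rightarrow> bool \<times> 'z list \<Rightarrow> ('z list \<times> bool list \<times> 'z list) pmf" where
  "attach_prefix W \<rho> n = (\<lambda>(v, q). map_pmf (\<lambda>(zs, l). (zs, l, q)) (prefix_channel W \<rho> n v))"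

lemma pmf_prefix_channel_pos:
  assumes "\<And>x. pmf (W x) z > 0"
  shows "pmf (prefix_channel W \<rho> n v) (replicate (Suc n) z, replicate n False) > 0"
proof -
  define l where "l = replicate n False"
  have "pmf (outputs W (circuit_prefix \<rho> l v @ [v])) (replicate (length (circuit_prefix \<rho> l v @ [v])) z) > 0"
    by (rule pmf_outputs_replicate_pos[OF assms])
  moreover have "pmf (map_pmf (\<lambda>zs. (zs, l)) M) (zs, l) = pmf M zs" for M :: "'a list pmf" and zs
    by (rule pmf_map_inj') (auto simp: inj_def)
  ultimately have "0 < pmf (unif_bits n) l * pmf (map_pmf (\<lambda>zs. (zs, l)) (outputs W (circuit_prefix \<rho> l v @ [v])))
      (replicate (Suc n) z, l)"
    unfolding l_def by (simp add: pmf_unif_bits)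
  also have "\<dots> \<le> pmf (prefix_channel W \<rho> n v) (replicate (Suc n) z, l)"
    unfolding prefix_channel_def by (rule pmf_bind_ge)
  finally show ?thesis unfolding l_def .
qed

lemma below_channel_inputs_differ:
  assumes "W True \<noteq> W False" "k < length \<sigma>"
  shows "below_channel W \<sigma> k True \<noteq> below_channel W \<sigma> k False"
proof (cases "\<sigma> ! k")
  case L
  have "map_pmf hd (below_channel W \<sigma> k n) = W n" for n
    unfolding below_channel_def below_offset_def using L by (simp add: map_bind_pmf map_hd_outputs)
  then show ?thesis using assms(1) by metis
next
  case R
  have "below_channel W \<sigma> k n = suffix_channel W (drop (Suc k) \<sigma>) n" for n
    unfolding below_channel_def suffix_channel_def below_offset_def using R by simp
  then show ?thesis using suffix_channel_inputs_differ[OF assms(1)] by simp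
qed

lemma sym_cap_below_channel_le: "sym_cap (below_channel W \<sigma> k) \<le> sym_cap W"
proof -
  define M where
    "M = (\<lambda>n. bind_pmf (unif_bits (length \<sigma> - k - 1)) (\<lambda>r. map_pmf (Pair r) (W (n \<noteq> below_offset \<sigma> k r))))"
  define K where "K = (\<lambda>(r, z). map_pmf (Cons z) (outputs W (circuit_rec (drop (Suc k) \<sigma>) r)))"
  have "below_channel W \<sigma> k = (\<lambda>n. bind_pmf (M n) K)"
    unfolding below_channel_def M_def K_def by (intro ext) (simp add: outputs_Cons bind_assoc_pmf bind_map_pmf)
  then have "sym_cap (below_channel W \<sigma> k) \<le> sym_cap M" using sym_cap_bind_le[of M K] by simp
  also have "sym_cap M = sym_cap W"
    unfolding M_def unif_bits_def by (rule sym_cap_masked[OF finite_bool_lists bool_lists_nonempty])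
  finally show ?thesis .
qed


text \<open>At a line \<open>k\<close> of type L, let \<open>n\<close> be the bit that line \<open>k+1\<close> adds into line \<open>k\<close>. Given the
  inputs below line \<open>k+1\<close>, \<open>n\<close> is a uniform bit; the outputs of lines \<open>1, \<dots>, k\<close> depend only on
  \<open>u\<^sub>1, \<dots>, u\<^sub>k\<^sub>-\<^sub>1\<close> and \<open>x\<^sub>k = u\<^sub>k + n\<close>, those of the lines below only on \<open>n\<close>.\<close>

lemma circuit_rec_L_line:
  fixes \<sigma> :: "LR list" and l r :: "bool list" and b c :: bool
  assumes "length \<sigma> = m" "1 \<le> k" "k < m" "\<sigma> ! (k - 1) = L" "length l = k - 1" "length r = m - k - 1"
  defines "n \<equiv> c \<noteq> (if \<sigma> ! k = L then circuit_feed (drop (Suc k) \<sigma>) r else False)"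
  shows "circuit_rec \<sigma> (l @ b # c # r) = circuit_prefix (take (k - 1) \<sigma>) l (b \<noteq> n) @
     (b \<noteq> n) # (n \<noteq> below_offset \<sigma> k r) # circuit_rec (drop (Suc k) \<sigma>) r"
proof -
  define \<tau> where "\<tau> = drop (Suc k) \<sigma>"
  have drop_k: "drop k \<sigma> = \<sigma> ! k # \<tau>" unfolding \<tau>_def using assms by (simp add: Cons_nth_drop_Suc)
  have len: "length \<tau> = length r" unfolding \<tau>_def using assms by simp
  have feed: "circuit_feed (drop k \<sigma>) (c # r) = n"
    unfolding drop_k n_def \<tau>_def[symmetric] by (cases "\<sigma> ! k") (simp_all add: circuit_feed_L[OF len] circuit_feed_R)
  have "(c \<noteq> circuit_feed \<tau> r) = (n \<noteq> below_offset \<sigma> k r)"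
    unfolding n_def below_offset_def \<tau>_def by (cases "\<sigma> ! k") auto
  then have rec: "circuit_rec (drop k \<sigma>) (c # r) = (n \<noteq> below_offset \<sigma> k r) # circuit_rec \<tau> r"
    unfolding drop_k using circuit_rec_Cons[OF len] by simp
  have "Suc (length l) = k" using assms by simp
  then show ?thesis
    using circuit_rec_split[of \<sigma> l "c # r" b] assms feed rec unfolding \<tau>_def by simp
qed

lemma bind_coin_xor_bind:
  "bind_pmf coin (\<lambda>c. bind_pmf M (\<lambda>r. f (c \<noteq> d r) r)) = bind_pmf coin (\<lambda>n. bind_pmf M (f n))"
proof -
  have "bind_pmf coin (\<lambda>c. bind_pmf M (\<lambda>r. f (c \<noteq> d r) r)) = bind_pmf M (\<lambda>r. bind_pmf coin (\<lambda>c. f (c \<noteq> d r) r))"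
    by (rule bind_commute_pmf)
  also have "\<dots> = bind_pmf M (\<lambda>r. bind_pmf coin (\<lambda>n. f n r))"
    using bind_coin_xor[of "\<lambda>n. f n r" "d r" for r] by simp
  also have "\<dots> = bind_pmf coin (\<lambda>n. bind_pmf M (f n))"
    by (rule bind_commute_pmf)
  finally show ?thesis .
qed

lemma bind_outputs_below_eq_below_channel:
  assumes "k < length \<sigma>"
  shows "bind_pmf (unif_bits (length \<sigma> - k - 1)) (\<lambda>r. map_pmf (\<lambda>zs. (zs, l))
      (outputs W (a0 @ (n \<noteq> below_offset \<sigma> k r) # circuit_rec (drop (Suc k) \<sigma>) r))) =
    bind_pmf (outputs W a0) (\<lambda>a. map_pmf (\<lambda>q. (a @ q, l)) (below_channel W \<sigma> k n))"
  unfolding below_channel_def outputs_append map_bind_pmf map_pmf_comp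
  by (subst bind_commute_pmf) (simp add: comp_def)

lemma synth_L_line_eq:
  assumes "valid_order \<sigma> p" "length \<sigma> = m" "\<sigma> ! (m - 1) = R" "1 \<le> k" "k < m" "\<sigma> ! (k - 1) = L"
  shows "synth (\<lambda>_. W) m p k b = bind_pmf coin (\<lambda>v. bind_pmf (prefix_channel W (take (k - 1) \<sigma>) (k - 1) v)
           (\<lambda>(a, l). map_pmf (\<lambda>q. (a @ q, l)) (below_channel W \<sigma> k (b \<noteq> v))))"
proof -
  define \<rho> where "\<rho> = take (k - 1) \<sigma>"
  define U where "U = unif_bits (k - 1)"
  define F where "F = (\<lambda>l n r. map_pmf (\<lambda>zs. (zs, l)) (outputs W ((circuit_prefix \<rho> l (b \<noteq> n) @ [b \<noteq> n]) @
    (n \<noteq> below_offset \<sigma> k r) # circuit_rec (drop (Suc k) \<sigma>) r)))"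
  define G where "G = (\<lambda>l v. bind_pmf (outputs W (circuit_prefix \<rho> l v @ [v]))
    (\<lambda>a. map_pmf (\<lambda>q. (a @ q, l)) (below_channel W \<sigma> k (b \<noteq> v))))"
  obtain n0 where m_k: "m - k = Suc n0" and n0: "n0 = length \<sigma> - k - 1"
    using assms by (metis Suc_diff_Suc diff_Suc_1)
  have L_rec: "map_pmf (\<lambda>zs. (zs, l)) (outputs W (circuit_rec \<sigma> (l @ b # c # r))) =
      F l (c \<noteq> (if \<sigma> ! k = L then circuit_feed (drop (Suc k) \<sigma>) r else False)) r"
    if "length l = k - 1" "length r = n0" for l c r
    unfolding F_def \<rho>_def using assms that by (subst circuit_rec_L_line[of \<sigma> m k]) (auto simp: n0)
  have "synth (\<lambda>_. W) m p k b = bind_pmf U (\<lambda>l. bind_pmf (unif_bits (m - k))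
      (\<lambda>r. map_pmf (\<lambda>zs. (zs, l)) (outputs W (circuit_rec \<sigma> (l @ b # r)))))"
    unfolding U_def by (rule synth_eq_bind_circuit_rec) (use assms in auto)
  also have "\<dots> = bind_pmf U (\<lambda>l. bind_pmf coin (\<lambda>c. bind_pmf (unif_bits n0)
      (\<lambda>r. F l (c \<noteq> (if \<sigma> ! k = L then circuit_feed (drop (Suc k) \<sigma>) r else False)) r)))"
    unfolding m_k bind_unif_bits_Suc by (intro bind_pmf_cong refl) (simp add: L_rec U_def set_unif_bits)
  also have "\<dots> = bind_pmf U (\<lambda>l. bind_pmf coin (\<lambda>n. bind_pmf (unif_bits n0) (F l n)))"
    by (rule bind_pmf_cong[OF refl], rule bind_coin_xor_bind)
  also have "\<dots> = bind_pmf U (\<lambda>l. bind_pmf coin (\<lambda>n. G l (b \<noteq> n)))"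
  proof -
    have "(b = (b = x)) = x" for x by auto
    then show ?thesis unfolding F_def G_def n0 bind_outputs_below_eq_below_channel[OF assms(5)[folded assms(2)]]
      by (intro bind_pmf_cong refl) simp_all
  qed
  also have "\<dots> = bind_pmf coin (\<lambda>v. bind_pmf U (\<lambda>l. G l v))"
    using bind_coin_xor[of "\<lambda>v. bind_pmf U (\<lambda>l. G l v)" b] by (subst bind_commute_pmf) (simp add: eq_commute)
  also have "\<dots> = bind_pmf coin (\<lambda>v. bind_pmf (prefix_channel W \<rho> (k - 1) v)
      (\<lambda>(a, l). map_pmf (\<lambda>q. (a @ q, l)) (below_channel W \<sigma> k (b \<noteq> v))))"
    unfolding G_def prefix_channel_def U_def bind_assoc_pmf bind_map_pmf by simp
  finally show ?thesis unfolding \<rho>_def .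
qed

lemma map_bind_masked_attach_prefix:
  "map_pmf (\<lambda>(zs, l, q). (zs @ q, l)) (bind_pmf (masked Q b) (attach_prefix W \<rho> n)) =
   bind_pmf coin (\<lambda>v. bind_pmf (prefix_channel W \<rho> n v) (\<lambda>(a, l). map_pmf (\<lambda>q. (a @ q, l)) (Q (b \<noteq> v))))"
proof -
  have "map_pmf (\<lambda>(zs, l, q). (zs @ q, l)) (bind_pmf (masked Q b) (attach_prefix W \<rho> n)) =
      bind_pmf coin (\<lambda>v. bind_pmf (Q (b \<noteq> v)) (\<lambda>q. map_pmf (\<lambda>(a, l). (a @ q, l)) (prefix_channel W \<rho> n v)))"
    unfolding masked_def attach_prefix_def
    by (simp add: map_bind_pmf bind_assoc_pmf bind_map_pmf map_pmf_comp case_prod_beta')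
  also have "\<dots> = bind_pmf coin (\<lambda>v. bind_pmf (prefix_channel W \<rho> n v) (\<lambda>(a, l). map_pmf (\<lambda>q. (a @ q, l)) (Q (b \<noteq> v))))"
    unfolding map_pmf_def by (subst bind_commute_pmf) (simp add: case_prod_beta')
  finally show ?thesis .
qed


lemma sym_cap_synth_L_line:
  assumes "valid_order \<sigma> p" "length \<sigma> = m" "\<sigma> ! (m - 1) = R" "1 \<le> k" "k < m" "\<sigma> ! (k - 1) = L"
  shows "sym_cap (synth (\<lambda>_. W) m p k) \<le> sym_cap W"
    and "sym_cap W \<notin> {0, 1} \<Longrightarrow> sym_cap (synth (\<lambda>_. W) m p k) < sym_cap W"
proof -
  define Q where "Q = below_channel W \<sigma> k"
  define K where "K = attach_prefix W (take (k - 1) \<sigma>) (k - 1)"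
  have "synth (\<lambda>_. W) m p k = (\<lambda>b. map_pmf (\<lambda>(zs, l, q). (zs @ q, l)) (bind_pmf (masked Q b) K))"
    unfolding Q_def K_def map_bind_masked_attach_prefix synth_L_line_eq[OF assms] ..
  then have synth_le: "sym_cap (synth (\<lambda>_. W) m p k) \<le> sym_cap (\<lambda>b. bind_pmf (masked Q b) K)"
    by (simp only: sym_cap_map_le)
  have masked_le: "sym_cap (masked Q) \<le> sym_cap W"
    unfolding Q_def sym_cap_masked_channel by (rule sym_cap_below_channel_le)
  show "sym_cap (synth (\<lambda>_. W) m p k) \<le> sym_cap W"
    using synth_le sym_cap_bind_le[of "masked Q" K] masked_le by linarith
  assume "sym_cap W \<notin> {0, 1}"
  then obtain z where "pmf (W True) z > 0" "pmf (W False) z > 0"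
    using sym_cap_neq_1_imp_common_output by blast
  then have z: "pmf (W x) z > 0" for x by (cases x) simp_all
  have "Q True \<noteq> Q False"
    using \<open>sym_cap W \<notin> {0, 1}\<close> assms unfolding Q_def
    by (intro below_channel_inputs_differ sym_cap_neq_0_imp_inputs_differ) simp_all
  then obtain q where q: "pmf (Q True) q \<noteq> pmf (Q False) q" by (auto simp: pmf_eq_iff)
  define out where "out = (replicate k z, replicate (k - 1) False, q)"
  have K_pos: "pmf (K (v, q)) out > 0" for v
  proof -
    have "pmf (K (v, q)) out = pmf (prefix_channel W (take (k - 1) \<sigma>) (k - 1) v) (replicate k z, replicate (k - 1) False)"
      unfolding K_def attach_prefix_def out_def
      by (subst pmf_map_inj'[symmetric, where f="\<lambda>(zs, l). (zs, l, q)"]) (auto simp: inj_on_def)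
    then show ?thesis using pmf_prefix_channel_pos[where \<rho>="take (k - 1) \<sigma>" and n="k - 1" and v=v, OF z] assms(4) by simp
  qed
  have "pmf (Q True) q * pmf (Q True) q \<noteq> pmf (Q False) q * pmf (Q False) q"
    using q by (metis pmf_nonneg real_sqrt_abs2 abs_of_nonneg)
  then have "pmf (masked Q True) (False, q) * pmf (masked Q False) (True, q) \<noteq>
      pmf (masked Q True) (True, q) * pmf (masked Q False) (False, q)"
    by (simp add: pmf_masked)
  then have "sym_cap (\<lambda>b. bind_pmf (masked Q b) K) < sym_cap (masked Q)"
    by (rule sym_cap_bind_less_if_merges[of K "(False, q)" out "(True, q)", OF K_pos K_pos])
  then show "sym_cap (synth (\<lambda>_. W) m p k) < sym_cap W"
    using synth_le masked_le by linarith
qed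


lemma length_filter_concat_replicate: "length (filter P (concat (replicate n xs))) = n * length (filter P xs)"
  by (induction n) auto

lemma length_pattern: "length (pattern b g) = b + g"
proof -
  have c: "length (concat (replicate n [L, R])) = 2 * n" for n by (induction n) auto
  show ?thesis unfolding pattern_def using c by auto
qed

lemma length_filter_pattern: "length (filter (\<lambda>x. x = L) (pattern b g)) = b"
    "length (filter (\<lambda>x. x = R) (pattern b g)) = g"
  unfolding pattern_def by (auto simp: length_filter_concat_replicate filter_replicate)

lemma last_concat_replicate_LR: "last (concat (replicate (Suc n) [L, R])) = R"
  by (induction n) auto

lemma pattern_first_last:
  assumes "0 < b" "0 < g"
  shows "pattern b g ! 0 = L" "pattern b g ! (b + g - 1) = R"
proof -
  have ne: "pattern b g \<noteq> []" using length_pattern[of b g] assms by auto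
  have "hd (pattern b g) = L"
  proof (cases "g \<le> b")
    case True
    obtain n where n: "g = Suc n" using assms by (cases g) auto
    show ?thesis using True n unfolding pattern_def by (cases "b - g") auto
  next
    case False
    obtain n where n: "b = Suc n" using assms by (cases b) auto
    show ?thesis using False n unfolding pattern_def by simp
  qed
  then show "pattern b g ! 0 = L" using ne by (simp add: hd_conv_nth)
  have "last (pattern b g) = R"
  proof (cases "g \<le> b")
    case True
    obtain n where n: "g = Suc n" using assms by (cases g) auto
    show ?thesis using True n last_concat_replicate_LR[of n] unfolding pattern_def by simp
  next
    case False
    obtain n where n: "g - b = Suc n" using False by (cases "g - b") auto
    show ?thesis using False n unfolding pattern_def by simp
  qed
  then show "pattern b g ! (b + g - 1) = R" using ne length_pattern[of b g] by (simp add: last_conv_nth)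
qed

lemma nth_line_bounds:
  assumes "1 \<le> i" "i \<le> length (filter (\<lambda>x. x = t) \<sigma>)"
  shows "1 \<le> nth_line \<sigma> t i" "nth_line \<sigma> t i \<le> length \<sigma>" "\<sigma> ! (nth_line \<sigma> t i - 1) = t"
proof -
  define ys where "ys = [1..<Suc (length \<sigma>)]"
  define f where "f = (\<lambda>k. \<sigma> ! (k - 1))"
  define xs where "xs = filter (\<lambda>k. \<sigma> ! (k - 1) = t) ys"
  have m: "map f ys = \<sigma>"
  proof -
    have "ys = map Suc [0..<length \<sigma>]" unfolding ys_def by (simp add: map_Suc_upt)
    then have "map f ys = map (\<lambda>k. \<sigma> ! k) [0..<length \<sigma>]" unfolding f_def by simp
    then show ?thesis by (simp add: map_nth)
  qed
  have lx: "length xs = length (filter (\<lambda>x. x = t) \<sigma>)"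
  proof -
    have "filter (\<lambda>x. x = t) (map f ys) = map f (filter ((\<lambda>x. x = t) \<circ> f) ys)" by (rule filter_map)
    then have "length (filter (\<lambda>x. x = t) \<sigma>) = length (filter ((\<lambda>x. x = t) \<circ> f) ys)" using m by (metis length_map)
    moreover have "((\<lambda>x. x = t) \<circ> f) = (\<lambda>k. \<sigma> ! (k - 1) = t)" by (simp add: o_def f_def)
    ultimately show ?thesis unfolding xs_def by simp
  qed
  have "xs ! (i - 1) \<in> set xs" using assms lx by (intro nth_mem) simp
  then have "xs ! (i - 1) \<in> set ys" "\<sigma> ! (xs ! (i - 1) - 1) = t" unfolding xs_def by auto
  moreover have "set ys = {1..<Suc (length \<sigma>)}" unfolding ys_def by (rule set_upt)
  ultimately show "1 \<le> nth_line \<sigma> t i" "nth_line \<sigma> t i \<le> length \<sigma>" "\<sigma> ! (nth_line \<sigma> t i - 1) = t"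
    unfolding nth_line_def ys_def[symmetric] xs_def[symmetric] by auto
qed

lemma nth_line_pattern_L:
  assumes "0 < b" "0 < g" "i \<in> {1..b}"
  shows "1 \<le> nth_line (pattern b g) L i" "nth_line (pattern b g) L i < b + g"
    "pattern b g ! (nth_line (pattern b g) L i - 1) = L"
proof -
  have "1 \<le> nth_line (pattern b g) L i" "nth_line (pattern b g) L i \<le> b + g"
    "pattern b g ! (nth_line (pattern b g) L i - 1) = L"
    using nth_line_bounds[of i L "pattern b g"] assms length_filter_pattern(1)[of b g] length_pattern[of b g]
    by auto
  moreover have "pattern b g ! (b + g - 1) = R" using pattern_first_last assms by blast
  ultimately show "1 \<le> nth_line (pattern b g) L i" "nth_line (pattern b g) L i < b + g"
    "pattern b g ! (nth_line (pattern b g) L i - 1) = L"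
    by (metis le_neq_implies_less LR.distinct(1))+
qed

lemma nth_line_pattern_R:
  assumes "0 < b" "0 < g" "j \<in> {1..g}"
  shows "2 \<le> nth_line (pattern b g) R j" "nth_line (pattern b g) R j \<le> b + g"
    "pattern b g ! (nth_line (pattern b g) R j - 1) = R"
proof -
  have "1 \<le> nth_line (pattern b g) R j" "nth_line (pattern b g) R j \<le> b + g"
    "pattern b g ! (nth_line (pattern b g) R j - 1) = R"
    using nth_line_bounds[of j R "pattern b g"] assms length_filter_pattern(2)[of b g] length_pattern[of b g]
    by auto
  moreover have "pattern b g ! 0 = L" using pattern_first_last assms by blast
  ultimately show "2 \<le> nth_line (pattern b g) R j" "nth_line (pattern b g) R j \<le> b + g"
    "pattern b g ! (nth_line (pattern b g) R j - 1) = R"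
    by (metis One_nat_def Suc_1 diff_self_eq_0 le_neq_implies_less less_eq_Suc_le LR.distinct(1))+
qed

theorem proposition3:
  fixes W :: "'z channel" and b g :: nat and p :: "nat \<Rightarrow> real"
  assumes "0 < b" and "0 < g"
    and "valid_order (pattern b g) p"
  shows "\<forall>i\<in>{1..b}. \<forall>j\<in>{1..g}.
           sym_cap (L1 W b g p i) \<le> sym_cap W \<and> sym_cap W \<le> sym_cap (R1 W b g p j) \<and>
           (sym_cap W \<notin> {0, 1} \<longrightarrow>
              sym_cap (L1 W b g p i) < sym_cap W \<and> sym_cap W < sym_cap (R1 W b g p j))"
proof (intro ballI)
  fix i j assume i: "i \<in> {1..b}" and j: "j \<in> {1..g}"
  have len: "length (pattern b g) = b + g" by (rule length_pattern)
  have last_R: "pattern b g ! (b + g - 1) = R" using pattern_first_last assms(1,2) by blast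
  note L_line = sym_cap_synth_L_line[OF assms(3) len last_R nth_line_pattern_L[OF assms(1,2) i], of W]
  note R_line = sym_cap_synth_R_line[OF assms(3) len last_R nth_line_pattern_R[OF assms(1,2) j], of W]
  show "sym_cap (L1 W b g p i) \<le> sym_cap W \<and> sym_cap W \<le> sym_cap (R1 W b g p j) \<and>
      (sym_cap W \<notin> {0, 1} \<longrightarrow> sym_cap (L1 W b g p i) < sym_cap W \<and> sym_cap W < sym_cap (R1 W b g p j))"
    unfolding L1_def R1_def using L_line R_line by blast
qed

end
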